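(* There is a polynomial-time reduction from 3-Coloring to Fall 3-Coloring. That is, there is a polynomial-time algorithm that, given a graph $G$, constructs a graph $G'$ such that $G$ has a proper vertex $3$-coloring if and only if $G'$ has a fall $3$-coloring.
   Context: All graphs are finite and undirected. 3-Coloring is the problem of deciding whether a given graph admits a proper vertex coloring with $3$ colors. For a graph $G=(V,E)$ and a partition $\Pi=\{V_1,\dots,V_k\}$ of $V$, a vertex $v\in V_i$ is colorful if $v$ is adjacent to at least one vertex of each class $V_j$ with $j\neq i$. $\Pi$ is a fall $k$-coloring if every $V_i$ is an independent set and every vertex is colorful; equivalently, $V$ is partitioned into $k$ independent dominating sets. Fall $k$-Coloring is the problem of deciding whether a given graph admits a fall $k$-coloring. *)

theory Defs
  imports Main "HOL-Library.Disjoint_Sets"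
begin

definition graph :: "'a set \<Rightarrow> ('a \<Rightarrow> 'a \<Rightarrow> bool) \<Rightarrow> bool" where
  "graph V E \<longleftrightarrow> finite V \<and> (\<forall>u v. E u v \<longrightarrow> u \<in> V \<and> v \<in> V)
     \<and> (\<forall>u v. E u v \<longrightarrow> E v u) \<and> (\<forall>v. \<not> E v v)"

definition proper_coloring :: "'a set \<Rightarrow> ('a \<Rightarrow> 'a \<Rightarrow> bool) \<Rightarrow> nat \<Rightarrow> ('a \<Rightarrow> nat) \<Rightarrow> bool" where
  "proper_coloring V E k c \<longleftrightarrow> (\<forall>v\<in>V. c v < k) \<and> (\<forall>u\<in>V. \<forall>v\<in>V. E u v \<longrightarrow> c u \<noteq> c v)"

definition colorable :: "'a set \<Rightarrow> ('a \<Rightarrow> 'a \<Rightarrow> bool) \<Rightarrow> nat \<Rightarrow> bool" where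
  "colorable V E k \<longleftrightarrow> (\<exists>c. proper_coloring V E k c)"

definition independent :: "('a \<Rightarrow> 'a \<Rightarrow> bool) \<Rightarrow> 'a set \<Rightarrow> bool" where
  "independent E A \<longleftrightarrow> (\<forall>u\<in>A. \<forall>v\<in>A. \<not> E u v)"

definition colorful :: "('a \<Rightarrow> 'a \<Rightarrow> bool) \<Rightarrow> 'a set set \<Rightarrow> 'a set \<Rightarrow> 'a \<Rightarrow> bool" where
  "colorful E P A v \<longleftrightarrow> (\<forall>B\<in>P. B \<noteq> A \<longrightarrow> (\<exists>u\<in>B. E v u))"

definition fall_coloring :: "'a set \<Rightarrow> ('a \<Rightarrow> 'a \<Rightarrow> bool) \<Rightarrow> nat \<Rightarrow> 'a set set \<Rightarrow> bool" where
  "fall_coloring V E k P \<longleftrightarrow> partition_on V P \<and> finite P \<and> card P = k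
     \<and> (\<forall>A\<in>P. independent E A) \<and> (\<forall>A\<in>P. \<forall>v\<in>A. colorful E P A v)"

definition fall_colorable :: "'a set \<Rightarrow> ('a \<Rightarrow> 'a \<Rightarrow> bool) \<Rightarrow> nat \<Rightarrow> bool" where
  "fall_colorable V E k \<longleftrightarrow> (\<exists>P. fall_coloring V E k P)"

definition enc :: "nat \<Rightarrow> (nat \<Rightarrow> nat \<Rightarrow> bool) \<Rightarrow> bool list" where
  "enc n E = concat (map (\<lambda>i. map (\<lambda>j. E i j) [0..<n]) [0..<n])"

datatype move = MoveL | MoveR | Stay

text \<open>A machine: number of states Q (states 0..<Q, start state 0, halting state 1),
  number of tape symbols S (symbols 0..<S; 0 = blank, 1 = bit False, 2 = bit True),
  and a transition function.\<close>
type_synonym tm = "nat \<times> nat \<times> (nat \<Rightarrow> nat \<Rightarrow> nat \<times> nat \<times> move)"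

definition tm_wf :: "tm \<Rightarrow> bool" where
  "tm_wf M = (case M of (Q, S, \<delta>) \<Rightarrow> 2 \<le> Q \<and> 3 \<le> S \<and>
     (\<forall>q<Q. \<forall>a<S. fst (\<delta> q a) < Q \<and> fst (snd (\<delta> q a)) < S))"

type_synonym config = "nat \<times> (int \<Rightarrow> nat) \<times> int"

definition mv :: "move \<Rightarrow> int" where
  "mv m = (case m of MoveL \<Rightarrow> -1 | MoveR \<Rightarrow> 1 | Stay \<Rightarrow> 0)"

definition tm_step :: "tm \<Rightarrow> config \<Rightarrow> config" where
  "tm_step M c = (case M of (Q, S, \<delta>) \<Rightarrow> (case c of (q, tape, pos) \<Rightarrow>
     if q = 1 then c else
       (case \<delta> q (tape pos) of (q', a', m) \<Rightarrow> (q', tape(pos := a'), pos + mv m))))"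

definition tm_run :: "tm \<Rightarrow> nat \<Rightarrow> config \<Rightarrow> config" where
  "tm_run M t c = (tm_step M ^^ t) c"

definition bitsym :: "bool \<Rightarrow> nat" where
  "bitsym b = (if b then 2 else 1)"

definition tm_init :: "bool list \<Rightarrow> config" where
  "tm_init w = (0, (\<lambda>i. if 0 \<le> i \<and> i < int (length w) then bitsym (w ! nat i) else 0), 0)"

definition tm_computes_in :: "tm \<Rightarrow> bool list \<Rightarrow> bool list \<Rightarrow> nat \<Rightarrow> bool" where
  "tm_computes_in M w w' t = (case tm_run M t (tm_init w) of (q, tape, pos) \<Rightarrow>
     q = 1 \<and> (\<forall>i<length w'. tape (int i) = bitsym (w' ! i)) \<and> tape (int (length w')) = 0)"

end

(*
  The reduction replaces every vertex v of G by a triangle {3v, 3v + 1, 3v + 2} and keeps the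
  edges of G between the first corners 3u and 3v.  If c is a proper 3-colouring of G, then
  i \<mapsto> (c (i div 3) + i mod 3) mod 3 is a fall 3-colouring: every triangle sees all three
  colours, and first corners keep the colours of c.  Conversely, a fall 3-colouring is proper,
  and its restriction to the first corners colours G.  The empty graph, which has no fall
  3-colouring, is treated as the one-vertex graph, whose blow-up is a triangle.

  The blow-up is computed from the adjacency matrix of G in quadratic time by a Turing machine
  that first shifts its input to the left of the origin, then computes n with a unary counter:
  while unmarked input cells remain, it marks 2k + 1 of them and grows the counter from k to
  k + 1 cells.  Finally it writes the 9 n^2 output bits row by row, three bits per (row, column)
  pair, reading the bit E v w when it writes the row of the first corner 3v.  The machine is
  described over finite datatypes of states and symbols and then numbered into the raw model.
*)

theory Submission
  imports Defs
begin

section \<open>Clique blow-ups and fall colourings\<close>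

definition clique_blowup :: "nat \<Rightarrow> nat \<Rightarrow> (nat \<Rightarrow> nat \<Rightarrow> bool) \<Rightarrow> nat \<Rightarrow> nat \<Rightarrow> bool" where
  "clique_blowup k n E i j \<longleftrightarrow> i < k * n \<and> j < k * n \<and>
     (if i div k = j div k then i \<noteq> j else i mod k = 0 \<and> j mod k = 0 \<and> E (i div k) (j div k))"

lemma graph_clique_blowup: "graph {0..<n} E \<Longrightarrow> graph {0..<k * n} (clique_blowup k n E)"
  by (auto simp: graph_def clique_blowup_def)

lemma colorable_if_fall_coloring:
  assumes "fall_coloring V E k P"
  shows "colorable V E k"
proof -
  have partition: "partition_on V P" and "finite P" "card P = k"
    and indep: "\<And>A. A \<in> P \<Longrightarrow> independent E A"
    using assms by (auto simp: fall_coloring_def)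
  then obtain h where h: "bij_betw h P {0..<k}"
    using ex_bij_betw_finite_nat by blast
  define part where "part v = (SOME A. A \<in> P \<and> v \<in> A)" for v
  have part: "part v \<in> P \<and> v \<in> part v" if "v \<in> V" for v
    unfolding part_def by (rule someI_ex) (use partition_onD1[OF partition] that in blast)
  have "proper_coloring V E k (h \<circ> part)"
    unfolding proper_coloring_def
  proof (intro conjI ballI impI)
    show "(h \<circ> part) v < k" if "v \<in> V" for v
      using part[OF that] h by (auto simp: bij_betw_def)
    show "(h \<circ> part) u \<noteq> (h \<circ> part) v" if "u \<in> V" "v \<in> V" "E u v" for u v
    proof
      assume "(h \<circ> part) u = (h \<circ> part) v"
      then have "part u = part v"
        using h part[OF that(1)] part[OF that(2)] unfolding bij_betw_def inj_on_def by simp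
      then show False
        using indep part[OF that(1)] part[OF that(2)] that(3) unfolding independent_def by metis
    qed
  qed
  then show ?thesis
    unfolding colorable_def by blast
qed

lemma colorable_of_clique_blowup:
  assumes "colorable {0..<k * n} (clique_blowup k n E) k" and "graph {0..<n} E" and "0 < k"
  shows "colorable {0..<n} E k"
proof -
  obtain c where c: "proper_coloring {0..<k * n} (clique_blowup k n E) k c"
    using assms(1) by (auto simp: colorable_def)
  have "k * v < k * n" if "v < n" for v
    using that \<open>0 < k\<close> by simp
  moreover have "clique_blowup k n E (k * u) (k * v)" if "u < n" "v < n" "E u v" for u v
    using that assms(2,3) by (auto simp: clique_blowup_def graph_def)
  ultimately have "proper_coloring {0..<n} E k (\<lambda>v. c (k * v))"
    using c unfolding proper_coloring_def by (metis atLeastLessThan_iff zero_le)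
  then show ?thesis
    unfolding colorable_def by blast
qed

lemma fall_colorable_if_coloring:
  assumes c: "proper_coloring V E k c" and "V \<noteq> {}"
    and colorful: "\<And>v j. v \<in> V \<Longrightarrow> j < k \<Longrightarrow> j \<noteq> c v \<Longrightarrow> \<exists>u\<in>V. E v u \<and> c u = j"
  shows "fall_colorable V E k"
proof -
  define cls where "cls j = {v \<in> V. c v = j}" for j
  have cls_ne: "cls j \<noteq> {}" if "j < k" for j
  proof -
    obtain v where "v \<in> V"
      using \<open>V \<noteq> {}\<close> by blast
    then show ?thesis
      using colorful[of v j] that by (cases "c v = j") (auto simp: cls_def)
  qed
  have "inj_on cls {0..<k}"
  proof (rule inj_onI)
    fix x y assume "x \<in> {0..<k}" "cls x = cls y"
    then obtain v where "v \<in> cls x" "v \<in> cls y"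
      using cls_ne by fastforce
    then show "x = y"
      by (simp add: cls_def)
  qed
  then have "card (cls ` {0..<k}) = k"
    by (simp add: card_image)
  moreover have "partition_on V (cls ` {0..<k})"
  proof (rule partition_onI)
    show "\<Union> (cls ` {0..<k}) = V"
      using c by (auto simp: cls_def proper_coloring_def)
    show "disjnt A B" if "A \<in> cls ` {0..<k}" "B \<in> cls ` {0..<k}" "A \<noteq> B" for A B
      using that by (auto simp: disjnt_def cls_def)
    show "{} \<notin> cls ` {0..<k}"
      using cls_ne by (metis atLeastLessThan_iff imageE)
  qed
  moreover have "independent E A" if "A \<in> cls ` {0..<k}" for A
    using c that unfolding independent_def cls_def proper_coloring_def by fastforce
  moreover have "colorful E (cls ` {0..<k}) A v" if "A \<in> cls ` {0..<k}" "v \<in> A" for A v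
    using that colorful unfolding colorful_def cls_def by fastforce
  ultimately have "fall_coloring V E k (cls ` {0..<k})"
    by (simp add: fall_coloring_def)
  then show ?thesis
    unfolding fall_colorable_def by blast
qed

lemma mod_add_left_inj:
  fixes a b c k :: nat
  assumes "a < k" "b < k" "(c + a) mod k = (c + b) mod k"
  shows "a = b"
proof (rule ccontr)
  have dvd: "k dvd y - x" if "x \<le> y" "(c + x) mod k = (c + y) mod k" for x y
    using that mod_eq_dvd_iff_nat[of "c + x" "c + y" k] by simp
  assume "a \<noteq> b"
  then consider "a < b" | "b < a" by linarith
  then show False
    by cases (use assms dvd nat_dvd_not_less in \<open>(metis less_imp_le_nat less_imp_diff_less zero_less_diff)+\<close>)
qed

definition blowup_coloring :: "nat \<Rightarrow> (nat \<Rightarrow> nat) \<Rightarrow> nat \<Rightarrow> nat" where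
  "blowup_coloring k c i = (c (i div k) + i mod k) mod k"

lemma proper_blowup_coloring:
  assumes c: "proper_coloring {0..<n} E k c"
  shows "proper_coloring {0..<k * n} (clique_blowup k n E) k (blowup_coloring k c)"
  unfolding proper_coloring_def
proof (intro conjI ballI impI)
  fix i assume "i \<in> {0..<k * n}"
  then have "0 < k"
    by (cases "k = 0") simp_all
  then show "blowup_coloring k c i < k"
    by (simp add: blowup_coloring_def)
next
  fix i j assume "i \<in> {0..<k * n}" "j \<in> {0..<k * n}" and edge: "clique_blowup k n E i j"
  then have "0 < k"
    by (cases "k = 0") simp_all
  have "i div k < n" "j div k < n"
    using \<open>i \<in> {0..<k * n}\<close> \<open>j \<in> {0..<k * n}\<close> by (simp_all add: less_mult_imp_div_less mult.commute)
  show "blowup_coloring k c i \<noteq> blowup_coloring k c j"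
  proof (cases "i div k = j div k")
    case True
    moreover have "i \<noteq> j"
      using edge True by (simp add: clique_blowup_def)
    ultimately have "i mod k \<noteq> j mod k"
      by (metis div_mult_mod_eq)
    then show ?thesis
      using True mod_add_left_inj[of "i mod k" k "j mod k" "c (i div k)"] \<open>0 < k\<close>
      by (auto simp: blowup_coloring_def)
  next
    case False
    then have "i mod k = 0" "j mod k = 0" "E (i div k) (j div k)"
      using edge by (auto simp: clique_blowup_def)
    then show ?thesis
      using c \<open>i div k < n\<close> \<open>j div k < n\<close> by (auto simp: blowup_coloring_def proper_coloring_def)
  qed
qed

lemma blowup_coloring_colorful:
  assumes c: "proper_coloring {0..<n} E k c" and "i < k * n" "j < k" "j \<noteq> blowup_coloring k c i"
  shows "\<exists>u\<in>{0..<k * n}. clique_blowup k n E i u \<and> blowup_coloring k c u = j"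
proof -
  define v where "v = i div k"
  \<comment> \<open>the vertex of the clique of v that gets colour j\<close>
  define u where "u = k * v + (j + k - c v) mod k"
  have "0 < k"
    using assms(2) by (cases "k = 0") simp_all
  have "v < n"
    using assms(2) by (simp add: v_def less_mult_imp_div_less mult.commute)
  then have "c v < k" "(j + k - c v) mod k < k"
    using c \<open>0 < k\<close> by (auto simp: proper_coloring_def)
  then have "u div k = v"
    by (simp add: u_def)
  have "(c v + (j + k - c v) mod k) mod k = (c v + (j + k - c v)) mod k"
    by (simp add: mod_add_right_eq)
  also have "c v + (j + k - c v) = j + k"
    using \<open>c v < k\<close> by simp
  finally have "blowup_coloring k c u = j"
    using \<open>(j + k - c v) mod k < k\<close> \<open>u div k = v\<close> assms(3) by (simp add: blowup_coloring_def u_def)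
  moreover have "u < k * Suc v"
    using \<open>(j + k - c v) mod k < k\<close> by (simp add: u_def)
  then have "u < k * n"
    using \<open>v < n\<close> by (metis Suc_leI mult_le_mono2 order_less_le_trans)
  moreover have "u \<noteq> i"
    using \<open>blowup_coloring k c u = j\<close> assms(4) by auto
  ultimately show ?thesis
    using \<open>u div k = v\<close> assms(2) by (auto simp: clique_blowup_def v_def)
qed

lemma fall_colorable_clique_blowup:
  assumes "proper_coloring {0..<n} E k c" and "0 < n"
  shows "fall_colorable {0..<k * n} (clique_blowup k n E) k"
proof (rule fall_colorable_if_coloring)
  show "proper_coloring {0..<k * n} (clique_blowup k n E) k (blowup_coloring k c)"
    by (rule proper_blowup_coloring[OF assms(1)])
  have "0 < k"
    using assms by (auto simp: proper_coloring_def)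
  then show "{0..<k * n} \<noteq> {}"
    using \<open>0 < n\<close> by simp
qed (use blowup_coloring_colorful[OF assms(1)] in auto)

theorem fall_colorable_clique_blowup_iff:
  assumes "graph {0..<n} E" "0 < n" "0 < k"
  shows "fall_colorable {0..<k * n} (clique_blowup k n E) k \<longleftrightarrow> colorable {0..<n} E k"
  using colorable_of_clique_blowup colorable_if_fall_coloring fall_colorable_clique_blowup assms
  unfolding colorable_def fall_colorable_def by blast

section \<open>Machines over finite alphabets\<close>

lemma finite_numbering:
  assumes "finite (UNIV :: 'a set)" and "distinct ps"
  obtains f :: "'a \<Rightarrow> nat"
  where "inj f" and "\<And>x. f x < card (UNIV :: 'a set)" and "map f ps = [0..<length ps]"
proof -
  obtain qs where qs: "set qs = UNIV - set ps" "distinct qs"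
    using finite_distinct_list[of "UNIV - set ps"] assms(1) by auto
  define l where "l = ps @ qs"
  have l: "distinct l" "set l = UNIV"
    using qs assms(2) by (auto simp: l_def)
  have bij: "bij_betw (the_inv_into {..<length l} ((!) l)) UNIV {..<length l}"
    using bij_betw_the_inv_into[OF bij_betw_nth[OF l(1) refl refl]] l(2) by simp
  show thesis
  proof
    show "inj (the_inv_into {..<length l} ((!) l))"
      using bij by (simp add: bij_betw_def)
    show "the_inv_into {..<length l} ((!) l) x < card (UNIV :: 'a set)" for x
      using bij l by (auto simp: bij_betw_def distinct_card[symmetric])
    have inj: "inj_on ((!) l) {..<length l}"
      by (rule inj_on_nth) (use l in auto)
    have "the_inv_into {..<length l} ((!) l) (ps ! i) = i" if "i < length ps" for i
    proof -
      have "ps ! i = l ! i" "i < length l"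
        using that by (simp_all add: l_def nth_append)
      then show ?thesis
        using the_inv_into_f_f[OF inj] by simp
    qed
    then show "map (the_inv_into {..<length l} ((!) l)) ps = [0..<length ps]"
      by (intro nth_equalityI) simp_all
  qed
qed

locale machine =
  fixes \<delta> :: "'s \<Rightarrow> 'a \<Rightarrow> 's \<times> 'a \<times> move" and halt :: 's and blank :: 'a
begin

definition step :: "'s \<times> (int \<Rightarrow> 'a) \<times> int \<Rightarrow> 's \<times> (int \<Rightarrow> 'a) \<times> int" where
  "step c = (case c of (s, tape, pos) \<Rightarrow> if s = halt then c else
     (case \<delta> s (tape pos) of (s', a, m) \<Rightarrow> (s', tape(pos := a), pos + mv m)))"

definition reaches :: "nat \<Rightarrow> 's \<times> (int \<Rightarrow> 'a) \<times> int \<Rightarrow> 's \<times> (int \<Rightarrow> 'a) \<times> int \<Rightarrow> bool" where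
  "reaches B c c' \<longleftrightarrow> (\<exists>t\<le>B. (step ^^ t) c = c')"

lemma reaches_refl: "reaches B c c"
  unfolding reaches_def by (rule exI[of _ 0]) simp

lemma reaches_trans [trans]: "reaches B c c' \<Longrightarrow> reaches B' c' c'' \<Longrightarrow> reaches (B + B') c c''"
proof -
  assume "reaches B c c'" "reaches B' c' c''"
  then obtain t t' where "t \<le> B" "(step ^^ t) c = c'" "t' \<le> B'" "(step ^^ t') c' = c''"
    unfolding reaches_def by blast
  then have "t' + t \<le> B + B'" "(step ^^ (t' + t)) c = c''"
    by (simp_all add: funpow_add)
  then show ?thesis
    unfolding reaches_def by blast
qed

lemma reaches_mono: "reaches B c c' \<Longrightarrow> B \<le> B' \<Longrightarrow> reaches B' c c'"
  unfolding reaches_def using order.trans by blast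

lemma reaches_cong: "reaches B c1 c2 \<Longrightarrow> c1 = c1' \<Longrightarrow> c2 = c2' \<Longrightarrow> B \<le> B' \<Longrightarrow> reaches B' c1' c2'"
  using reaches_mono by blast

lemma reaches_step:
  "s \<noteq> halt \<Longrightarrow> \<delta> s (tape pos) = (s', a, m) \<Longrightarrow> 1 \<le> B \<Longrightarrow>
   reaches B (s, tape, pos) (s', tape(pos := a), pos + mv m)"
  unfolding reaches_def by (rule exI[of _ 1]) (simp add: step_def)

lemma scan_right:
  assumes "s \<noteq> halt" and "\<And>j. j < k \<Longrightarrow> \<delta> s (tape (pos + int j)) = (s, tape (pos + int j), MoveR)"
  shows "reaches k (s, tape, pos) (s, tape, pos + int k)"
  using assms(2)
proof (induction k)
  case (Suc k)
  then have "reaches k (s, tape, pos) (s, tape, pos + int k)" by simp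
  also have "reaches 1 \<dots> (s, tape, pos + int (Suc k))"
    using reaches_step[of s tape "pos + int k", OF assms(1) Suc.prems[OF lessI]]
    by (simp add: mv_def algebra_simps)
  finally show ?case by simp
qed (simp add: reaches_refl)

lemma scan_left:
  assumes "s \<noteq> halt" and "\<And>j. j < k \<Longrightarrow> \<delta> s (tape (pos - int j)) = (s, tape (pos - int j), MoveL)"
  shows "reaches k (s, tape, pos) (s, tape, pos - int k)"
  using assms(2)
proof (induction k)
  case (Suc k)
  then have "reaches k (s, tape, pos) (s, tape, pos - int k)" by simp
  also have "reaches 1 \<dots> (s, tape, pos - int (Suc k))"
    using reaches_step[of s tape "pos - int k", OF assms(1) Suc.prems[OF lessI]]
    by (simp add: mv_def algebra_simps)
  finally show ?case by simp
qed (simp add: reaches_refl)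

definition tape :: "int \<Rightarrow> 'a list \<Rightarrow> int \<Rightarrow> 'a" where
  "tape lo xs i = (if lo \<le> i \<and> i < lo + int (length xs) then xs ! nat (i - lo) else blank)"

definition conf :: "'s \<Rightarrow> int \<Rightarrow> 'a list \<Rightarrow> nat \<Rightarrow> 's \<times> (int \<Rightarrow> 'a) \<times> int" where
  "conf s lo xs i = (s, tape lo xs, lo + int i)"

lemma tape_nth [simp]: "i < length xs \<Longrightarrow> tape lo xs (lo + int i) = xs ! i"
  by (simp add: tape_def)

lemma tape_before [simp]: "tape lo xs (lo - 1) = blank"
  and tape_after [simp]: "tape lo xs (lo + int (length xs)) = blank"
  by (simp_all add: tape_def)

lemma tape_beyond: "lo + int (length xs) \<le> p \<Longrightarrow> tape lo xs p = blank"
  by (simp add: tape_def)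

lemma tape_update: "i < length xs \<Longrightarrow> (tape lo xs)(lo + int i := a) = tape lo (xs[i := a])"
  by (rule ext) (auto simp: tape_def nth_list_update nat_eq_iff)

lemma tape_snoc: "(tape lo xs)(lo + int (length xs) := a) = tape lo (xs @ [a])"
  by (rule ext) (auto simp: tape_def nth_append)

lemma tape_cons: "(tape lo xs)(lo - 1 := a) = tape (lo - 1) (a # xs)"
proof
  fix i
  show "((tape lo xs)(lo - 1 := a)) i = tape (lo - 1) (a # xs) i"
  proof (cases "i = lo - 1")
    case False
    then have "lo \<le> i \<Longrightarrow> nat (i - (lo - 1)) = Suc (nat (i - lo))" by auto
    then show ?thesis using False by (auto simp: tape_def)
  qed (simp add: tape_def)
qed

lemma tape_snoc_blank: "(tape lo (xs @ [a]))(lo + int (length xs) := blank) = tape lo xs"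
  by (rule ext) (auto simp: tape_def nth_append)

lemma scan_right_conf:
  assumes "s \<noteq> halt" "i \<le> j" "j \<le> length xs" "j - i \<le> B"
    and "\<And>k. i \<le> k \<Longrightarrow> k < j \<Longrightarrow> \<delta> s (xs ! k) = (s, xs ! k, MoveR)"
  shows "reaches B (conf s lo xs i) (conf s lo xs j)"
proof -
  have "reaches (j - i) (s, tape lo xs, lo + int i) (s, tape lo xs, lo + int i + int (j - i))"
    by (rule scan_right) (use assms in \<open>simp_all add: add.assoc flip: of_nat_add\<close>)
  then show ?thesis
    using assms(2,4) by (auto simp: conf_def intro: reaches_mono)
qed

lemma scan_left_prefix:
  assumes "s \<noteq> halt" "k \<le> length xs" "k \<le> B"
    and "\<And>j. j < k \<Longrightarrow> \<delta> s (xs ! j) = (s, xs ! j, MoveL)"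
  shows "reaches B (s, tape lo xs, lo + int k - 1) (s, tape lo xs, lo - 1)"
proof -
  have "reaches k (s, tape lo xs, lo + int k - 1) (s, tape lo xs, lo + int k - 1 - int k)"
  proof (rule scan_left)
    fix j assume "j < k"
    then have "nat (lo + int k - 1 - int j - lo) = k - 1 - j" by simp
    then have "tape lo xs (lo + int k - 1 - int j) = xs ! (k - 1 - j)"
      using assms(2) \<open>j < k\<close> by (simp add: tape_def)
    then show "\<delta> s (tape lo xs (lo + int k - 1 - int j)) = (s, tape lo xs (lo + int k - 1 - int j), MoveL)"
      using assms(4)[of "k - 1 - j"] \<open>j < k\<close> by simp
  qed (rule assms(1))
  then show ?thesis
    using assms(3) by (auto intro: reaches_mono)
qed

lemma scan_left_conf:
  assumes "s \<noteq> halt" "i < length xs" "Suc i \<le> B"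
    and "\<And>j. j \<le> i \<Longrightarrow> \<delta> s (xs ! j) = (s, xs ! j, MoveL)"
  shows "reaches B (conf s lo xs i) (s, tape lo xs, lo - 1)"
  using scan_left_prefix[where k = "Suc i" and lo = lo] assms by (simp add: conf_def)

lemma return_home:
  assumes "s \<noteq> halt" "i < length xs" "i + 2 \<le> B" "\<delta> s blank = (s', blank, MoveR)"
    and "\<And>j. j \<le> i \<Longrightarrow> \<delta> s (xs ! j) = (s, xs ! j, MoveL)"
  shows "reaches B (conf s lo xs i) (conf s' lo xs 0)"
proof -
  have "reaches (Suc i) (conf s lo xs i) (s, tape lo xs, lo - 1)"
    by (rule scan_left_conf) (use assms in simp_all)
  also have "reaches 1 \<dots> (conf s' lo xs 0)"
    using reaches_step[of s "tape lo xs" "lo - 1"] assms(1,4) by (simp add: conf_def fun_upd_idem mv_def)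
  finally show ?thesis
    using assms(3) by (auto intro: reaches_mono)
qed

lemma step_right:
  assumes "s \<noteq> halt" "i < length xs" "1 \<le> B" "xs' = xs[i := a]" "\<delta> s (xs ! i) = (s', a, MoveR)"
  shows "reaches B (conf s lo xs i) (conf s' lo xs' (Suc i))"
  using reaches_step[of s "tape lo xs" "lo + int i" s' a MoveR B] assms
  by (simp add: conf_def tape_update mv_def algebra_simps)

lemma step_stay:
  assumes "s \<noteq> halt" "i < length xs" "1 \<le> B" "xs' = xs[i := a]" "\<delta> s (xs ! i) = (s', a, Stay)"
  shows "reaches B (conf s lo xs i) (conf s' lo xs' i)"
  using reaches_step[of s "tape lo xs" "lo + int i" s' a Stay B] assms
  by (simp add: conf_def tape_update mv_def)

lemma step_stay_same:
  assumes "s \<noteq> halt" "i < length xs" "1 \<le> B" "\<delta> s (xs ! i) = (s', xs ! i, Stay)"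
  shows "reaches B (conf s lo xs i) (conf s' lo xs i)"
  using step_stay[OF assms(1-3) _ assms(4)] by simp

lemma step_append_right:
  assumes "s \<noteq> halt" "i = length xs" "j = Suc i" "1 \<le> B" "\<delta> s blank = (s', a, MoveR)"
  shows "reaches B (conf s lo xs i) (conf s' lo (xs @ [a]) j)"
  using reaches_step[of s "tape lo xs" "lo + int (length xs)" s' a MoveR B] assms
  by (simp add: conf_def tape_snoc mv_def algebra_simps)

lemma step_append_stay:
  assumes "s \<noteq> halt" "i = length xs" "1 \<le> B" "\<delta> s blank = (s', a, Stay)"
  shows "reaches B (conf s lo xs i) (conf s' lo (xs @ [a]) i)"
  using reaches_step[of s "tape lo xs" "lo + int (length xs)" s' a Stay B] assms
  by (simp add: conf_def tape_snoc mv_def)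

lemma step_left_at_end:
  assumes "s \<noteq> halt" "length xs = Suc i" "1 \<le> B" "\<delta> s blank = (s', blank, MoveL)"
  shows "reaches B (conf s lo xs (Suc i)) (conf s' lo xs i)"
  using reaches_step[of s "tape lo xs" "lo + int (Suc i)" s' blank MoveL B] assms
  by (simp add: conf_def fun_upd_idem mv_def tape_beyond)

lemma step_stay_at_end:
  assumes "s \<noteq> halt" "i = length xs" "1 \<le> B" "\<delta> s blank = (s', blank, Stay)"
  shows "reaches B (conf s lo xs i) (conf s' lo xs i)"
  using reaches_step[of s "tape lo xs" "lo + int i" s' blank Stay B] assms
  by (simp add: conf_def fun_upd_idem mv_def tape_beyond)

lemma step_prepend:
  assumes "s \<noteq> halt" "1 \<le> B" "\<delta> s blank = (s', a, Stay)"
  shows "reaches B (s, tape lo xs, lo - 1) (conf s' (lo - 1) (a # xs) 0)"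
  using reaches_step[of s "tape lo xs" "lo - 1" s' a Stay B] assms
  by (simp add: conf_def tape_cons mv_def)

lemma step_drop_last:
  assumes "s \<noteq> halt" "1 \<le> B" "\<delta> s a = (s', blank, MoveL)"
  shows "reaches B (conf s lo (xs @ [a]) (length xs)) (s', tape lo xs, lo + int (length xs) - 1)"
  using reaches_step[of s "tape lo (xs @ [a])" "lo + int (length xs)" s' blank MoveL B] assms
  by (simp add: conf_def tape_snoc_blank mv_def nth_append)

definition tm_of :: "('s \<Rightarrow> nat) \<Rightarrow> ('a \<Rightarrow> nat) \<Rightarrow> tm" where
  "tm_of qn an = (card (UNIV :: 's set), card (UNIV :: 'a set),
     \<lambda>q c. case \<delta> (inv qn q) (inv an c) of (s', a, m) \<Rightarrow> (qn s', an a, m))"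

lemma tm_run_tm_of:
  assumes "inj qn" "inj an" "qn halt = 1"
  shows "tm_run (tm_of qn an) t (qn s, an \<circ> tp, pos) =
    (case (step ^^ t) (s, tp, pos) of (s', tp', pos') \<Rightarrow> (qn s', an \<circ> tp', pos'))"
proof (induction t arbitrary: s tp pos rule: nat.induct)
  have one: "tm_step (tm_of qn an) (qn s, an \<circ> tp, pos) =
      (case step (s, tp, pos) of (s', tp', pos') \<Rightarrow> (qn s', an \<circ> tp', pos'))" for s tp pos
  proof (cases "s = halt")
    case False
    then have "qn s \<noteq> 1"
      using inj_eq[OF assms(1), of s halt] assms(3) by simp
    moreover obtain s' a m where "\<delta> s (tp pos) = (s', a, m)"
      by (metis prod_cases3)
    ultimately show ?thesis
      using False by (simp add: tm_step_def step_def tm_of_def inv_f_f[OF assms(1)] inv_f_f[OF assms(2)] fun_upd_comp)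
  qed (simp add: tm_step_def step_def tm_of_def assms(3))
  case (Suc t)
  obtain s' tp' pos' where "(step ^^ t) (s, tp, pos) = (s', tp', pos')"
    by (metis prod_cases3)
  then show ?case
    using Suc.IH one[of s' tp' pos'] by (auto simp: tm_run_def comp_def)
qed (simp add: tm_run_def)

lemma simulated_by_tm:
  fixes start :: 's and zero one :: 'a
  assumes "finite (UNIV :: 's set)" "finite (UNIV :: 'a set)"
    and "start \<noteq> halt" and "distinct [blank, zero, one]"
  obtains M qn an where "tm_wf M" "qn start = 0" "qn halt = 1" "an blank = 0" "an zero = 1" "an one = 2"
    "\<And>t s tp pos. tm_run M t (qn s, an \<circ> tp, pos) =
       (case (step ^^ t) (s, tp, pos) of (s', tp', pos') \<Rightarrow> (qn s', an \<circ> tp', pos'))"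
proof -
  obtain qn where qn: "inj qn" "\<And>s. qn s < card (UNIV :: 's set)" "qn start = 0" "qn halt = 1"
    using finite_numbering[OF assms(1), of "[start, halt]"] assms(3) by auto
  obtain an where an: "inj an" "\<And>a. an a < card (UNIV :: 'a set)" "an blank = 0" "an zero = 1" "an one = 2"
    using finite_numbering[OF assms(2,4)] by (auto simp: numeral_2_eq_2 numeral_3_eq_3)
  have "2 \<le> card (UNIV :: 's set)"
    using card_mono[OF assms(1), of "{start, halt}"] assms(3) by simp
  moreover have "3 \<le> card (UNIV :: 'a set)"
    using card_mono[OF assms(2), of "set [blank, zero, one]"] distinct_card[OF assms(4)] by simp
  ultimately have "tm_wf (tm_of qn an)"
    by (simp add: tm_wf_def tm_of_def qn(2) an(2) case_prod_beta)
  then show thesis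
    using that qn an tm_run_tm_of[OF qn(1) an(1) qn(4)] by blast
qed

end

section \<open>The blow-up machine\<close>

datatype corner = C0 | C1 | C2

datatype mark = Done | Cur | Todo

text \<open>\<^term>\<open>Inp b m\<close> is a relocated input bit \<open>b\<close>; the flag \<open>m\<close> marks it as counted while \<open>n\<close> is computed
  and as not yet copied while the output is written. \<^term>\<open>Ctr p k\<close> is a counter cell; \<open>p\<close> is
  flipped once per pass over the counter and \<open>k\<close> records the status of the corresponding row.\<close>

datatype symbol = Blank | Bit bool | Inp bool bool | Ctr bool mark

datatype task = Check | Count bool | Pass bool corner | NextRow

datatype state = Start | Halt | ShiftScan | ShiftTake | ShiftCarry bool
  | Home task | Run task | Find bool | Extend
  | FetchBit bool bool | Seek bool corner bool bool | Put bool corner bool bool corner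

fun next_corner :: "corner \<Rightarrow> corner" where
  "next_corner C0 = C1" | "next_corner C1 = C2" | "next_corner C2 = C0"

definition adj_bit :: "corner \<Rightarrow> corner \<Rightarrow> bool \<Rightarrow> bool \<Rightarrow> bool" where
  "adj_bit a b diag e = (if a = b then a = C0 \<and> e else diag)"

fun after_pass :: "bool \<Rightarrow> corner \<Rightarrow> task" where
  "after_pass p C2 = NextRow"
| "after_pass p a = Pass (\<not> p) (next_corner a)"

fun transition :: "state \<Rightarrow> symbol \<Rightarrow> state \<times> symbol \<times> move" where
  "transition Start c = (case c of Bit _ \<Rightarrow> (ShiftScan, c, Stay) | _ \<Rightarrow> (ShiftScan, Bit False, Stay))"
| "transition ShiftScan c = (if c = Blank then (ShiftTake, c, MoveL) else (ShiftScan, c, MoveR))"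
| "transition ShiftTake c = (case c of Bit b \<Rightarrow> (ShiftCarry b, Blank, MoveL) | _ \<Rightarrow> (Home Check, c, Stay))"
| "transition (ShiftCarry b) c = (if c = Blank then (ShiftScan, Inp b False, Stay) else (ShiftCarry b, c, MoveL))"
| "transition (Home t) c = (if c = Blank then (Run t, c, MoveR) else (Home t, c, MoveL))"
| "transition (Run Check) c = (case c of
      Inp _ False \<Rightarrow> (Home (Count False), c, Stay)
    | Blank \<Rightarrow> (Home NextRow, c, MoveL)
    | _ \<Rightarrow> (Run Check, c, MoveR))"
| "transition (Run (Count p)) c = (case c of
      Ctr q k \<Rightarrow> if q = p then (Find p, Ctr (\<not> p) k, MoveR) else (Run (Count p), c, MoveR)
    | _ \<Rightarrow> (if p then Home Check else Extend, c, Stay))"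
| "transition (Find p) c = (case c of
      Inp b False \<Rightarrow> (Home (Count p), Inp b True, Stay)
    | _ \<Rightarrow> (Find p, c, MoveR))"
| "transition Extend c = (if c = Blank then (Run (Count True), Ctr True Todo, Stay) else (Extend, c, MoveL))"
| "transition (Run NextRow) c = (case c of
      Ctr q Done \<Rightarrow> (Run NextRow, c, MoveR)
    | Ctr q Cur \<Rightarrow> (Run NextRow, Ctr q Done, MoveR)
    | Ctr q Todo \<Rightarrow> (Home (Pass q C0), Ctr q Cur, Stay)
    | _ \<Rightarrow> (Halt, c, Stay))"
| "transition (Run (Pass p a)) c = (case c of
      Ctr q k \<Rightarrow> if q = p
        then (if a = C0 then FetchBit p (k = Cur) else Seek p a (k = Cur) False, Ctr (\<not> p) k, MoveR)
        else (Run (Pass p a), c, MoveR)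
    | _ \<Rightarrow> (Home (after_pass p a), c, Stay))"
| "transition (FetchBit p d) c = (case c of
      Inp b True \<Rightarrow> (Seek p C0 d b, Inp b False, MoveR)
    | _ \<Rightarrow> (FetchBit p d, c, MoveR))"
| "transition (Seek p a d e) c = (if c = Blank then (Put p a d e C0, c, Stay) else (Seek p a d e, c, MoveR))"
| "transition (Put p a d e b) c = (if b = C2 then (Home (Pass p a), Bit (adj_bit a b d e), Stay)
    else (Put p a d e (next_corner b), Bit (adj_bit a b d e), MoveR))"
| "transition Halt c = (Halt, c, Stay)"

lemma UNIV_corner: "UNIV = {C0, C1, C2}"
  using corner.exhaust by auto

instance corner :: finite
  by standard (simp add: UNIV_corner)

lemma UNIV_mark: "UNIV = {Done, Cur, Todo}"
  using mark.exhaust by auto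

instance mark :: finite
  by standard (simp add: UNIV_mark)

instance symbol :: finite
proof
  have "UNIV = insert Blank (range Bit \<union> range (case_prod Inp) \<union> range (case_prod Ctr))" (is "_ = ?R")
    by (rule set_eqI, case_tac x) auto
  moreover have "finite ?R" by simp
  ultimately show "finite (UNIV :: symbol set)" by simp
qed

instance task :: finite
proof
  have "UNIV = {Check, NextRow} \<union> range Count \<union> range (case_prod Pass)" (is "_ = ?R")
    by (rule set_eqI, case_tac x) auto
  moreover have "finite ?R" by simp
  ultimately show "finite (UNIV :: task set)" by simp
qed

instance state :: finite
proof
  have "UNIV = {Start, Halt, ShiftScan, ShiftTake, Extend} \<union> range ShiftCarry \<union> range Home
    \<union> range Run \<union> range Find \<union> range (case_prod FetchBit) \<union> range (\<lambda>(p, a, d, e). Seek p a d e)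
    \<union> range (\<lambda>(p, a, d, e, b). Put p a d e b)" (is "_ = ?R")
  proof (rule set_eqI, rule iffI)
    show "s \<in> ?R" for s
      by (cases s) (auto intro: range_eqI[where x = "(_, _, _, _, _)"] range_eqI[where x = "(_, _, _, _)"]
          range_eqI[where x = "(_, _)"])
  qed simp
  moreover have "finite ?R" by simp
  ultimately show "finite (UNIV :: state set)" by simp
qed

interpretation blowup: machine transition Halt Blank .

lemma go_home:
  assumes "i < length xs" "Blank \<notin> set xs" "i + 2 \<le> B"
  shows "blowup.reaches B (blowup.conf (Home t) lo xs i) (blowup.conf (Run t) lo xs 0)"
proof (rule blowup.return_home)
  show "transition (Home t) (xs ! j) = (Home t, xs ! j, MoveL)" if "j \<le> i" for j
    using assms(1,2) that by (metis transition.simps(5) le_less_trans nth_mem)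
qed (use assms in simp_all)

subsection \<open>Moving the input out of the way\<close>

definition relocated :: "bool list \<Rightarrow> bool list \<Rightarrow> symbol list" where
  "relocated zs ys = map (\<lambda>b. Inp b False) zs @ map Bit ys"

lemma shift_step:
  "blowup.reaches (2 * length (zs @ ys) + 4)
     (blowup.conf ShiftScan lo (relocated zs (ys @ [b])) 0)
     (blowup.conf ShiftScan (lo - 1) (relocated (b # zs) ys) 0)"
proof -
  define xs where "xs = relocated zs ys"
  have "blowup.reaches (Suc (length xs)) (blowup.conf ShiftScan lo (xs @ [Bit b]) 0)
      (blowup.conf ShiftScan lo (xs @ [Bit b]) (Suc (length xs)))"
    by (rule blowup.scan_right_conf) (auto simp: xs_def relocated_def nth_append)
  also have "blowup.reaches 1 \<dots> (blowup.conf ShiftTake lo (xs @ [Bit b]) (length xs))"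
    by (rule blowup.step_left_at_end) simp_all
  also have "blowup.reaches 1 \<dots> (ShiftCarry b, blowup.tape lo xs, lo + int (length xs) - 1)"
    by (rule blowup.step_drop_last) simp_all
  also have "blowup.reaches (length xs) \<dots> (ShiftCarry b, blowup.tape lo xs, lo - 1)"
    by (rule blowup.scan_left_prefix) (auto simp: xs_def relocated_def nth_append)
  also have "blowup.reaches 1 \<dots> (blowup.conf ShiftScan (lo - 1) (Inp b False # xs) 0)"
    by (rule blowup.step_prepend) simp_all
  finally show ?thesis
    by (rule blowup.reaches_cong) (simp_all add: xs_def relocated_def)
qed

lemma shift_loop:
  "blowup.reaches (length ys * (2 * length (zs @ ys) + 4))
     (blowup.conf ShiftScan lo (relocated zs ys) 0)
     (blowup.conf ShiftScan (lo - int (length ys)) (relocated (ys @ zs) []) 0)"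
proof (induction ys arbitrary: zs lo rule: rev_induct)
  case (snoc b ys)
  have "blowup.reaches (2 * length (zs @ ys) + 4) (blowup.conf ShiftScan lo (relocated zs (ys @ [b])) 0)
      (blowup.conf ShiftScan (lo - 1) (relocated (b # zs) ys) 0)"
    by (rule shift_step)
  also have "blowup.reaches (length ys * (2 * length ((b # zs) @ ys) + 4)) \<dots>
      (blowup.conf ShiftScan (lo - 1 - int (length ys)) (relocated (ys @ b # zs) []) 0)"
    by (rule snoc.IH)
  finally show ?case
    by (rule blowup.reaches_cong) (simp_all add: algebra_simps)
qed (simp add: blowup.reaches_refl)

lemma shift_finish:
  assumes "x \<noteq> []"
  shows "blowup.reaches (2 * length x + 3)
    (blowup.conf ShiftScan lo (relocated x []) 0) (blowup.conf (Run Check) lo (relocated x []) 0)"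
proof -
  obtain l where l: "length x = Suc l"
    using assms by (cases x) auto
  define xs where "xs = relocated x []"
  have xs: "length xs = Suc l" "Blank \<notin> set xs" "\<And>j. j < length xs \<Longrightarrow> xs ! j = Inp (x ! j) False"
    using l by (auto simp: xs_def relocated_def)
  have "blowup.reaches (Suc l) (blowup.conf ShiftScan lo xs 0) (blowup.conf ShiftScan lo xs (Suc l))"
    by (rule blowup.scan_right_conf) (use xs in auto)
  also have "blowup.reaches 1 \<dots> (blowup.conf ShiftTake lo xs l)"
    by (rule blowup.step_left_at_end) (use xs in simp_all)
  also have "blowup.reaches 1 \<dots> (blowup.conf (Home Check) lo xs l)"
    by (rule blowup.step_stay_same) (use xs in simp_all)
  also have "blowup.reaches (l + 2) \<dots> (blowup.conf (Run Check) lo xs 0)"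
    by (rule go_home) (use xs in simp_all)
  finally show ?thesis
    by (rule blowup.reaches_cong) (simp_all add: xs_def l)
qed

lemma relocate_input:
  assumes "x \<noteq> []"
  shows "blowup.reaches (length x * (2 * length x + 4) + 2 * length x + 3)
    (blowup.conf ShiftScan 0 (map Bit x) 0)
    (blowup.conf (Run Check) (- int (length x)) (relocated x []) 0)"
proof -
  have "blowup.reaches (length x * (2 * length x + 4)) (blowup.conf ShiftScan 0 (map Bit x) 0)
      (blowup.conf ShiftScan (- int (length x)) (relocated x []) 0)"
    using shift_loop[of x "[]" 0] by (simp add: relocated_def)
  also have "blowup.reaches (2 * length x + 3) \<dots> (blowup.conf (Run Check) (- int (length x)) (relocated x []) 0)"
    by (rule shift_finish[OF assms])
  finally show ?thesis
    by (simp add: add.assoc)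
qed

subsection \<open>Computing the number of vertices\<close>

text \<open>\<open>k\<close> is the number of rows started, so the current row is \<open>k - 1\<close>.\<close>

definition row_mark :: "nat \<Rightarrow> nat \<Rightarrow> mark" where
  "row_mark k j = (if Suc j < k then Done else if Suc j = k then Cur else Todo)"

definition counter :: "nat \<Rightarrow> nat \<Rightarrow> nat \<Rightarrow> bool \<Rightarrow> symbol list" where
  "counter r k f p = map (\<lambda>j. Ctr (if j < f then \<not> p else p) (row_mark k j)) [0..<r]"

lemma length_counter [simp]: "length (counter r k f p) = r"
  by (simp add: counter_def)

lemma nth_counter [simp]: "j < r \<Longrightarrow> counter r k f p ! j = Ctr (if j < f then \<not> p else p) (row_mark k j)"
  by (simp add: counter_def)

lemma Blank_notin_counter [simp]: "Blank \<notin> set (counter r k f p)"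
  by (auto simp: counter_def)

lemma counter_flip: "f < r \<Longrightarrow> (counter r k f p)[f := Ctr (\<not> p) (row_mark k f)] = counter r k (Suc f) p"
  by (rule nth_equalityI) (auto simp: nth_list_update)

lemma counter_flipped: "counter r k r p = counter r k 0 (\<not> p)"
  by (simp add: counter_def)

lemma counter_extend: "Ctr True Todo # counter r 0 r False = counter (Suc r) 0 0 True"
  by (rule nth_equalityI) (auto simp: nth_Cons' row_mark_def)

lemma counter_start_row: "0 < r \<Longrightarrow> (counter r 0 0 p)[0 := Ctr p Cur] = counter r 1 0 p"
  by (rule nth_equalityI) (auto simp: nth_list_update row_mark_def)

lemma counter_next_row:
  "Suc u < r \<Longrightarrow> (counter r (Suc u) 0 p)[u := Ctr p Done, Suc u := Ctr p Cur] = counter r (Suc (Suc u)) 0 p"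
  by (rule nth_equalityI) (auto simp: nth_list_update row_mark_def)

context
  fixes x :: "bool list"
begin

definition inputs :: "nat \<Rightarrow> bool \<Rightarrow> symbol list" where
  "inputs m flag = map (\<lambda>i. Inp (x ! i) (if i < m then flag else \<not> flag)) [0..<length x]"

lemma length_inputs [simp]: "length (inputs m flag) = length x"
  by (simp add: inputs_def)

lemma nth_inputs [simp]: "i < length x \<Longrightarrow> inputs m flag ! i = Inp (x ! i) (if i < m then flag else \<not> flag)"
  by (simp add: inputs_def)

lemma Blank_notin_inputs [simp]: "Blank \<notin> set (inputs m flag)"
  by (auto simp: inputs_def)

lemma inputs_mark: "m < length x \<Longrightarrow> (inputs m flag)[m := Inp (x ! m) flag] = inputs (Suc m) flag"
  by (rule nth_equalityI) (auto simp: nth_list_update)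

lemma inputs_all: "inputs (length x) True = inputs 0 False"
  by (simp add: inputs_def)

lemma relocated_eq_inputs: "relocated x [] = inputs 0 True"
  by (rule nth_equalityI) (simp_all add: relocated_def)

definition count_tape :: "nat \<Rightarrow> nat \<Rightarrow> bool \<Rightarrow> nat \<Rightarrow> symbol list" where
  "count_tape r f p m = counter r 0 f p @ inputs m True"

lemma count_trip:
  assumes "f < r" "m < length x"
  shows "blowup.reaches (2 * r + 2 * m + 3) (blowup.conf (Run (Count p)) lo (count_tape r f p m) 0)
    (blowup.conf (Run (Count p)) lo (count_tape r (Suc f) p (Suc m)) 0)"
proof -
  have "blowup.reaches f (blowup.conf (Run (Count p)) lo (count_tape r f p m) 0)
      (blowup.conf (Run (Count p)) lo (count_tape r f p m) f)"
    by (rule blowup.scan_right_conf) (use assms in \<open>auto simp: count_tape_def nth_append\<close>)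
  also have "blowup.reaches 1 \<dots> (blowup.conf (Find p) lo (count_tape r (Suc f) p m) (Suc f))"
    by (rule blowup.step_right) (use assms in \<open>simp_all add: count_tape_def nth_append list_update_append counter_flip\<close>)
  also have "blowup.reaches (r + m - Suc f) \<dots> (blowup.conf (Find p) lo (count_tape r (Suc f) p m) (r + m))"
    by (rule blowup.scan_right_conf) (use assms in \<open>auto simp: count_tape_def nth_append\<close>)
  also have "blowup.reaches 1 \<dots> (blowup.conf (Home (Count p)) lo (count_tape r (Suc f) p (Suc m)) (r + m))"
    by (rule blowup.step_stay) (use assms in \<open>simp_all add: count_tape_def nth_append list_update_append inputs_mark\<close>)
  also have "blowup.reaches (r + m + 2) \<dots> (blowup.conf (Run (Count p)) lo (count_tape r (Suc f) p (Suc m)) 0)"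
    by (rule go_home) (use assms in \<open>simp_all add: count_tape_def\<close>)
  finally show ?thesis
    by (rule blowup.reaches_cong) (use assms in simp_all)
qed

lemma count_loop:
  assumes "f + d = r" "m + d \<le> length x"
  shows "blowup.reaches (d * (2 * r + 2 * length x + 3))
    (blowup.conf (Run (Count p)) lo (count_tape r f p m) 0)
    (blowup.conf (Run (Count p)) lo (count_tape r r p (m + d)) 0)"
  using assms
proof (induction d arbitrary: f m)
  case (Suc d)
  have "blowup.reaches (2 * r + 2 * m + 3) (blowup.conf (Run (Count p)) lo (count_tape r f p m) 0)
      (blowup.conf (Run (Count p)) lo (count_tape r (Suc f) p (Suc m)) 0)"
    by (rule count_trip) (use Suc.prems in auto)
  also have "blowup.reaches (d * (2 * r + 2 * length x + 3)) \<dots>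
      (blowup.conf (Run (Count p)) lo (count_tape r r p (Suc m + d)) 0)"
    by (rule Suc.IH) (use Suc.prems in auto)
  finally show ?case
    by (rule blowup.reaches_cong) (use Suc.prems in simp_all)
qed (simp add: blowup.reaches_refl)

lemma count_exit_true:
  assumes "x \<noteq> []"
  shows "blowup.reaches (2 * r + 3) (blowup.conf (Run (Count True)) lo (count_tape r r True m) 0)
    (blowup.conf (Run Check) lo (count_tape r 0 False m) 0)"
proof -
  have "blowup.reaches r (blowup.conf (Run (Count True)) lo (count_tape r r True m) 0)
      (blowup.conf (Run (Count True)) lo (count_tape r r True m) r)"
    by (rule blowup.scan_right_conf) (auto simp: count_tape_def nth_append)
  also have "blowup.reaches 1 \<dots> (blowup.conf (Home Check) lo (count_tape r r True m) r)"
    by (rule blowup.step_stay_same) (use assms in \<open>simp_all add: count_tape_def nth_append\<close>)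
  also have "blowup.reaches (r + 2) \<dots> (blowup.conf (Run Check) lo (count_tape r r True m) 0)"
    by (rule go_home) (use assms in \<open>simp_all add: count_tape_def\<close>)
  finally show ?thesis
    by (rule blowup.reaches_cong) (simp_all add: count_tape_def counter_flipped)
qed

lemma count_exit_false:
  assumes "x \<noteq> []"
  shows "blowup.reaches (2 * r + 3) (blowup.conf (Run (Count False)) lo (count_tape r r False m) 0)
    (blowup.conf (Run (Count True)) (lo - 1) (count_tape (Suc r) 0 True m) 0)"
proof -
  have "blowup.reaches r (blowup.conf (Run (Count False)) lo (count_tape r r False m) 0)
      (blowup.conf (Run (Count False)) lo (count_tape r r False m) r)"
    by (rule blowup.scan_right_conf) (auto simp: count_tape_def nth_append)
  also have "blowup.reaches 1 \<dots> (blowup.conf Extend lo (count_tape r r False m) r)"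
    by (rule blowup.step_stay_same) (use assms in \<open>simp_all add: count_tape_def nth_append\<close>)
  also have "blowup.reaches (Suc r) \<dots> (Extend, blowup.tape lo (count_tape r r False m), lo - 1)"
  proof (rule blowup.scan_left_conf)
    show "transition Extend (count_tape r r False m ! j) = (Extend, count_tape r r False m ! j, MoveL)"
      if "j \<le> r" for j
      using that assms by (cases "j < r") (simp_all add: count_tape_def nth_append)
  qed (use assms in \<open>simp_all add: count_tape_def\<close>)
  also have "blowup.reaches 1 \<dots> (blowup.conf (Run (Count True)) (lo - 1) (Ctr True Todo # count_tape r r False m) 0)"
    by (rule blowup.step_prepend) simp_all
  finally show ?thesis
    by (rule blowup.reaches_cong) (simp_all add: count_tape_def flip: counter_extend)
qed

lemma check_more:
  assumes "k * k < length x"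
  shows "blowup.reaches (2 * (k + k * k) + 3) (blowup.conf (Run Check) lo (count_tape k 0 False (k * k)) 0)
    (blowup.conf (Run (Count False)) lo (count_tape k 0 False (k * k)) 0)"
proof -
  have "blowup.reaches (k + k * k) (blowup.conf (Run Check) lo (count_tape k 0 False (k * k)) 0)
      (blowup.conf (Run Check) lo (count_tape k 0 False (k * k)) (k + k * k))"
    by (rule blowup.scan_right_conf) (use assms in \<open>auto simp: count_tape_def nth_append\<close>)
  also have "blowup.reaches 1 \<dots> (blowup.conf (Home (Count False)) lo (count_tape k 0 False (k * k)) (k + k * k))"
    by (rule blowup.step_stay_same) (use assms in \<open>simp_all add: count_tape_def nth_append\<close>)
  also have "blowup.reaches (k + k * k + 2) \<dots> (blowup.conf (Run (Count False)) lo (count_tape k 0 False (k * k)) 0)"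
    by (rule go_home) (use assms in \<open>simp_all add: count_tape_def\<close>)
  finally show ?thesis
    by (rule blowup.reaches_cong) simp_all
qed

lemma check_done:
  assumes "k * k = length x" "x \<noteq> []"
  shows "blowup.reaches (2 * (k + length x) + 2) (blowup.conf (Run Check) lo (count_tape k 0 False (k * k)) 0)
    (blowup.conf (Run NextRow) lo (count_tape k 0 False (k * k)) 0)"
proof -
  define l where "l = k + length x - 1"
  have l: "length (count_tape k 0 False (k * k)) = Suc l"
    using assms(2) by (simp add: count_tape_def l_def)
  have "blowup.reaches (Suc l) (blowup.conf (Run Check) lo (count_tape k 0 False (k * k)) 0)
      (blowup.conf (Run Check) lo (count_tape k 0 False (k * k)) (Suc l))"
    by (rule blowup.scan_right_conf) (use assms l in \<open>auto simp: count_tape_def nth_append\<close>)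
  also have "blowup.reaches 1 \<dots> (blowup.conf (Home NextRow) lo (count_tape k 0 False (k * k)) l)"
    by (rule blowup.step_left_at_end) (use l in simp_all)
  also have "blowup.reaches (l + 2) \<dots> (blowup.conf (Run NextRow) lo (count_tape k 0 False (k * k)) 0)"
    by (rule go_home) (use l in \<open>simp_all add: count_tape_def\<close>)
  finally show ?thesis
    by (rule blowup.reaches_cong) (use assms in \<open>simp_all add: l_def\<close>)
qed

lemma count_round:
  assumes "Suc k * Suc k \<le> length x"
  shows "blowup.reaches ((2 * k + 4) * (2 * length x + 2 * k + 5))
    (blowup.conf (Run Check) lo (count_tape k 0 False (k * k)) 0)
    (blowup.conf (Run Check) (lo - 1) (count_tape (Suc k) 0 False (Suc k * Suc k)) 0)"
proof -
  have x: "x \<noteq> []" "k * k < length x" "k * k + k + Suc k \<le> length x"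
    using assms by (auto simp: algebra_simps)
  have "blowup.reaches (2 * (k + k * k) + 3) (blowup.conf (Run Check) lo (count_tape k 0 False (k * k)) 0)
      (blowup.conf (Run (Count False)) lo (count_tape k 0 False (k * k)) 0)"
    by (rule check_more) (use x in simp)
  also have "blowup.reaches (k * (2 * k + 2 * length x + 3)) \<dots>
      (blowup.conf (Run (Count False)) lo (count_tape k k False (k * k + k)) 0)"
    by (rule count_loop) (use x in simp_all)
  also have "blowup.reaches (2 * k + 3) \<dots>
      (blowup.conf (Run (Count True)) (lo - 1) (count_tape (Suc k) 0 True (k * k + k)) 0)"
    by (rule count_exit_false[OF x(1)])
  also have "blowup.reaches (Suc k * (2 * Suc k + 2 * length x + 3)) \<dots>
      (blowup.conf (Run (Count True)) (lo - 1) (count_tape (Suc k) (Suc k) True (Suc k * Suc k)) 0)"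
    by (rule blowup.reaches_cong[OF count_loop[of 0 "Suc k" "Suc k" "k * k + k"]])
      (use x in \<open>simp_all add: algebra_simps\<close>)
  also have "blowup.reaches (2 * Suc k + 3) \<dots>
      (blowup.conf (Run Check) (lo - 1) (count_tape (Suc k) 0 False (Suc k * Suc k)) 0)"
    by (rule count_exit_true[OF x(1)])
  finally show ?thesis
    by (rule blowup.reaches_cong) (use x in \<open>simp_all add: algebra_simps\<close>)
qed

lemma count_phase:
  assumes "n * n = length x" "k + d = n"
  shows "blowup.reaches (d * ((2 * n + 4) * (2 * length x + 2 * n + 5)))
    (blowup.conf (Run Check) lo (count_tape k 0 False (k * k)) 0)
    (blowup.conf (Run Check) (lo - int d) (count_tape n 0 False (n * n)) 0)"
  using assms(2)
proof (induction d arbitrary: k lo)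
  case (Suc d)
  have "Suc k * Suc k \<le> length x"
    using mult_le_mono[of "Suc k" n "Suc k" n] Suc.prems assms(1) by simp
  then have "blowup.reaches ((2 * k + 4) * (2 * length x + 2 * k + 5))
      (blowup.conf (Run Check) lo (count_tape k 0 False (k * k)) 0)
      (blowup.conf (Run Check) (lo - 1) (count_tape (Suc k) 0 False (Suc k * Suc k)) 0)"
    by (rule count_round)
  also have "blowup.reaches (d * ((2 * n + 4) * (2 * length x + 2 * n + 5))) \<dots>
      (blowup.conf (Run Check) (lo - 1 - int d) (count_tape n 0 False (n * n)) 0)"
    by (rule Suc.IH) (use Suc.prems in simp)
  finally show ?case
  proof (rule blowup.reaches_cong)
    have "(2 * k + 4) * (2 * length x + 2 * k + 5) \<le> (2 * n + 4) * (2 * length x + 2 * n + 5)"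
      using Suc.prems by (intro mult_le_mono) simp_all
    then show "(2 * k + 4) * (2 * length x + 2 * k + 5) + d * ((2 * n + 4) * (2 * length x + 2 * n + 5))
        \<le> Suc d * ((2 * n + 4) * (2 * length x + 2 * n + 5))"
      by simp
  qed (simp_all add: blowup.conf_def algebra_simps)
qed (simp add: blowup.reaches_refl)

end

subsection \<open>Writing the blown-up adjacency matrix\<close>

definition cell_bits :: "corner \<Rightarrow> bool \<Rightarrow> bool \<Rightarrow> bool list" where
  "cell_bits a d e = map (\<lambda>b. adj_bit a b d e) [C0, C1, C2]"

lemma put_cell:
  assumes "i \<le> length xs" "Blank \<notin> set xs"
  shows "blowup.reaches (2 * length xs + 8) (blowup.conf (Seek p a d e) lo xs i)
    (blowup.conf (Run (Pass p a)) lo (xs @ map Bit (cell_bits a d e)) 0)"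
proof -
  have "blowup.reaches (length xs - i) (blowup.conf (Seek p a d e) lo xs i) (blowup.conf (Seek p a d e) lo xs (length xs))"
    by (rule blowup.scan_right_conf) (use assms nth_mem in force)+
  also have "blowup.reaches 1 \<dots> (blowup.conf (Put p a d e C0) lo xs (length xs))"
    by (rule blowup.step_stay_at_end) simp_all
  also have "blowup.reaches 1 \<dots> (blowup.conf (Put p a d e C1) lo (xs @ [Bit (adj_bit a C0 d e)]) (Suc (length xs)))"
    by (rule blowup.step_append_right) simp_all
  also have "blowup.reaches 1 \<dots> (blowup.conf (Put p a d e C2) lo ((xs @ [Bit (adj_bit a C0 d e)]) @ [Bit (adj_bit a C1 d e)])
      (Suc (Suc (length xs))))"
    by (rule blowup.step_append_right) simp_all
  also have "blowup.reaches 1 \<dots> (blowup.conf (Home (Pass p a)) lo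
      (((xs @ [Bit (adj_bit a C0 d e)]) @ [Bit (adj_bit a C1 d e)]) @ [Bit (adj_bit a C2 d e)])
      (Suc (Suc (length xs))))"
    by (rule blowup.step_append_stay) simp_all
  also have "blowup.reaches (length xs + 4) \<dots> (blowup.conf (Run (Pass p a)) lo
      (((xs @ [Bit (adj_bit a C0 d e)]) @ [Bit (adj_bit a C1 d e)]) @ [Bit (adj_bit a C2 d e)]) 0)"
    by (rule go_home) (use assms in auto)
  finally show ?thesis
    by (rule blowup.reaches_cong) (simp_all add: cell_bits_def)
qed

lemma row_mark_eq_Cur: "row_mark k j = Cur \<longleftrightarrow> Suc j = k"
  by (simp add: row_mark_def)

context
  fixes x :: "bool list" and n :: nat
begin

definition row_tape :: "nat \<Rightarrow> nat \<Rightarrow> bool \<Rightarrow> nat \<Rightarrow> bool list \<Rightarrow> symbol list" where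
  "row_tape k f p m out = counter n k f p @ inputs x m False @ map Bit out"

lemma length_row_tape [simp]: "length (row_tape k f p m out) = n + length x + length out"
  by (simp add: row_tape_def)

lemma Blank_notin_row_tape [simp]: "Blank \<notin> set (row_tape k f p m out)"
  by (auto simp: row_tape_def)

lemma fetch_trip:
  assumes "f < n" "m < length x"
  shows "blowup.reaches (3 * (n + length x + length out) + 9)
    (blowup.conf (Run (Pass p C0)) lo (row_tape (Suc v) f p m out) 0)
    (blowup.conf (Run (Pass p C0)) lo (row_tape (Suc v) (Suc f) p (Suc m) (out @ cell_bits C0 (f = v) (x ! m))) 0)"
proof -
  have "blowup.reaches f (blowup.conf (Run (Pass p C0)) lo (row_tape (Suc v) f p m out) 0)
      (blowup.conf (Run (Pass p C0)) lo (row_tape (Suc v) f p m out) f)"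
    by (rule blowup.scan_right_conf) (use assms in \<open>auto simp: row_tape_def nth_append\<close>)
  also have "blowup.reaches 1 \<dots> (blowup.conf (FetchBit p (f = v)) lo (row_tape (Suc v) (Suc f) p m out) (Suc f))"
    by (rule blowup.step_right)
      (use assms in \<open>simp_all add: row_tape_def nth_append list_update_append counter_flip row_mark_eq_Cur\<close>)
  also have "blowup.reaches (n + m - Suc f) \<dots> (blowup.conf (FetchBit p (f = v)) lo (row_tape (Suc v) (Suc f) p m out) (n + m))"
    by (rule blowup.scan_right_conf) (use assms in \<open>auto simp: row_tape_def nth_append\<close>)
  also have "blowup.reaches 1 \<dots> (blowup.conf (Seek p C0 (f = v) (x ! m)) lo (row_tape (Suc v) (Suc f) p (Suc m) out) (Suc (n + m)))"
    by (rule blowup.step_right)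
      (use assms in \<open>simp_all add: row_tape_def nth_append list_update_append inputs_mark\<close>)
  also have "blowup.reaches (2 * (n + length x + length out) + 8) \<dots>
      (blowup.conf (Run (Pass p C0)) lo (row_tape (Suc v) (Suc f) p (Suc m) out @ map Bit (cell_bits C0 (f = v) (x ! m))) 0)"
    by (rule blowup.reaches_mono[OF put_cell]) (use assms in simp_all)
  finally show ?thesis
    by (rule blowup.reaches_cong) (use assms in \<open>simp_all add: row_tape_def\<close>)
qed

lemma plain_trip:
  assumes "f < n" "a \<noteq> C0"
  shows "blowup.reaches (3 * (n + length x + length out) + 9)
    (blowup.conf (Run (Pass p a)) lo (row_tape (Suc v) f p m out) 0)
    (blowup.conf (Run (Pass p a)) lo (row_tape (Suc v) (Suc f) p m (out @ cell_bits a (f = v) False)) 0)"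
proof -
  have "blowup.reaches f (blowup.conf (Run (Pass p a)) lo (row_tape (Suc v) f p m out) 0)
      (blowup.conf (Run (Pass p a)) lo (row_tape (Suc v) f p m out) f)"
    by (rule blowup.scan_right_conf) (use assms in \<open>auto simp: row_tape_def nth_append\<close>)
  also have "blowup.reaches 1 \<dots> (blowup.conf (Seek p a (f = v) False) lo (row_tape (Suc v) (Suc f) p m out) (Suc f))"
    by (rule blowup.step_right)
      (use assms in \<open>simp_all add: row_tape_def nth_append list_update_append counter_flip row_mark_eq_Cur\<close>)
  also have "blowup.reaches (2 * (n + length x + length out) + 8) \<dots>
      (blowup.conf (Run (Pass p a)) lo (row_tape (Suc v) (Suc f) p m out @ map Bit (cell_bits a (f = v) False)) 0)"
    by (rule blowup.reaches_mono[OF put_cell]) (use assms in simp_all)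
  finally show ?thesis
    by (rule blowup.reaches_cong) (use assms in \<open>simp_all add: row_tape_def\<close>)
qed

definition pass_pos :: "corner \<Rightarrow> nat \<Rightarrow> nat \<Rightarrow> nat" where
  "pass_pos a v f = v * n + (if a = C0 then f else n)"

definition row_bits :: "nat \<Rightarrow> corner \<Rightarrow> nat \<Rightarrow> bool list" where
  "row_bits v a f = concat (map (\<lambda>w. cell_bits a (w = v) (x ! (v * n + w))) [f..<n])"

lemma length_row_bits [simp]: "length (row_bits v a f) = 3 * (n - f)"
proof -
  have "length (concat (map (\<lambda>w. cell_bits a (w = v) (x ! (v * n + w))) ws)) = 3 * length ws" for ws
    by (induction ws) (simp_all add: cell_bits_def)
  then show ?thesis
    by (simp add: row_bits_def)
qed

lemma row_bits_Suc: "f < n \<Longrightarrow> row_bits v a f = cell_bits a (f = v) (x ! (v * n + f)) @ row_bits v a (Suc f)"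
  by (simp add: row_bits_def upt_conv_Cons)

lemma pass_trip:
  assumes "f < n" "v < n" "n * n = length x"
  shows "blowup.reaches (3 * (n + length x + length out) + 9)
    (blowup.conf (Run (Pass p a)) lo (row_tape (Suc v) f p (pass_pos a v f) out) 0)
    (blowup.conf (Run (Pass p a)) lo
      (row_tape (Suc v) (Suc f) p (pass_pos a v (Suc f)) (out @ cell_bits a (f = v) (x ! (v * n + f)))) 0)"
proof (cases "a = C0")
  case True
  have "v * n + f < Suc v * n"
    using assms(1) by simp
  also have "\<dots> \<le> length x"
    using assms(2,3) mult_le_mono1[of "Suc v" n n] by simp
  finally show ?thesis
    using fetch_trip[OF assms(1), of "v * n + f"] True by (simp add: pass_pos_def)
next
  case False
  have bits: "cell_bits a d e = cell_bits a d False" for d e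
    using False by (cases a) (simp_all add: cell_bits_def adj_bit_def)
  show ?thesis
    using plain_trip[OF assms(1) False] False by (simp add: pass_pos_def bits[of _ "x ! (v * n + f)"])
qed

lemma pass_loop:
  assumes "f + d = n" "v < n" "n * n = length x" "length out + 3 * d \<le> 9 * length x"
  shows "blowup.reaches (d * (3 * (n + 10 * length x) + 9))
    (blowup.conf (Run (Pass p a)) lo (row_tape (Suc v) f p (pass_pos a v f) out) 0)
    (blowup.conf (Run (Pass p a)) lo (row_tape (Suc v) n p (pass_pos a v n) (out @ row_bits v a f)) 0)"
  using assms(1,4)
proof (induction d arbitrary: f out)
  case 0
  then show ?case
    by (simp add: row_bits_def blowup.reaches_refl)
next
  case (Suc d)
  have "blowup.reaches (3 * (n + length x + length out) + 9)
      (blowup.conf (Run (Pass p a)) lo (row_tape (Suc v) f p (pass_pos a v f) out) 0)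
      (blowup.conf (Run (Pass p a)) lo
        (row_tape (Suc v) (Suc f) p (pass_pos a v (Suc f)) (out @ cell_bits a (f = v) (x ! (v * n + f)))) 0)"
    by (rule pass_trip) (use Suc.prems assms(2,3) in simp_all)
  also have "blowup.reaches (d * (3 * (n + 10 * length x) + 9)) \<dots>
      (blowup.conf (Run (Pass p a)) lo (row_tape (Suc v) n p (pass_pos a v n)
        ((out @ cell_bits a (f = v) (x ! (v * n + f))) @ row_bits v a (Suc f))) 0)"
    by (rule Suc.IH) (use Suc.prems in \<open>simp_all add: cell_bits_def\<close>)
  finally show ?case
    by (rule blowup.reaches_cong) (use Suc.prems in \<open>simp_all add: row_bits_Suc\<close>)
qed

lemma pass_exit:
  assumes "x \<noteq> []"
  shows "blowup.reaches (2 * n + 3) (blowup.conf (Run (Pass p a)) lo (row_tape k n p m out) 0)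
    (blowup.conf (Run (after_pass p a)) lo (row_tape k 0 (\<not> p) m out) 0)"
proof -
  have "blowup.reaches n (blowup.conf (Run (Pass p a)) lo (row_tape k n p m out) 0)
      (blowup.conf (Run (Pass p a)) lo (row_tape k n p m out) n)"
    by (rule blowup.scan_right_conf) (auto simp: row_tape_def nth_append)
  also have "blowup.reaches 1 \<dots> (blowup.conf (Home (after_pass p a)) lo (row_tape k n p m out) n)"
    by (rule blowup.step_stay_same) (use assms in \<open>simp_all add: row_tape_def nth_append\<close>)
  also have "blowup.reaches (n + 2) \<dots> (blowup.conf (Run (after_pass p a)) lo (row_tape k n p m out) 0)"
    by (rule go_home) (use assms in simp_all)
  finally show ?thesis
    by (rule blowup.reaches_cong) (simp_all add: row_tape_def counter_flipped)
qed

lemma next_row: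
  assumes "v < n"
  shows "blowup.reaches (2 * n + 4) (blowup.conf (Run NextRow) lo (row_tape v 0 p m out) 0)
    (blowup.conf (Run (Pass p C0)) lo (row_tape (Suc v) 0 p m out) 0)"
proof (cases v)
  case 0
  have "blowup.reaches 1 (blowup.conf (Run NextRow) lo (row_tape 0 0 p m out) 0)
      (blowup.conf (Home (Pass p C0)) lo (row_tape 1 0 p m out) 0)"
    by (rule blowup.step_stay)
      (use assms 0 in \<open>simp_all add: row_tape_def nth_append list_update_append counter_start_row row_mark_def\<close>)
  also have "blowup.reaches 2 \<dots> (blowup.conf (Run (Pass p C0)) lo (row_tape 1 0 p m out) 0)"
    by (rule go_home) (use assms 0 in simp_all)
  finally show ?thesis
    by (rule blowup.reaches_cong) (use 0 in simp_all)
next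
  case (Suc u)
  have "blowup.reaches u (blowup.conf (Run NextRow) lo (row_tape (Suc u) 0 p m out) 0)
      (blowup.conf (Run NextRow) lo (row_tape (Suc u) 0 p m out) u)"
    by (rule blowup.scan_right_conf) (use assms Suc in \<open>auto simp: row_tape_def nth_append row_mark_def\<close>)
  also have "blowup.reaches 1 \<dots> (blowup.conf (Run NextRow) lo ((row_tape (Suc u) 0 p m out)[u := Ctr p Done]) (Suc u))"
    by (rule blowup.step_right) (use assms Suc in \<open>simp_all add: row_tape_def nth_append row_mark_def\<close>)
  also have "blowup.reaches 1 \<dots> (blowup.conf (Home (Pass p C0)) lo (row_tape (Suc (Suc u)) 0 p m out) (Suc u))"
    by (rule blowup.step_stay) (use assms Suc in
        \<open>simp_all add: row_tape_def nth_append list_update_append counter_next_row row_mark_def\<close>)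
  also have "blowup.reaches (Suc u + 2) \<dots> (blowup.conf (Run (Pass p C0)) lo (row_tape (Suc (Suc u)) 0 p m out) 0)"
    by (rule go_home) (use assms Suc in simp_all)
  finally show ?thesis
    by (rule blowup.reaches_cong) (use assms Suc in simp_all)
qed

lemma last_row_done:
  assumes "0 < n" "x \<noteq> []"
  shows "blowup.reaches (n + 1) (blowup.conf (Run NextRow) lo (row_tape n 0 p m out) 0)
    (blowup.conf Halt lo ((row_tape n 0 p m out)[n - 1 := Ctr p Done]) n)"
proof -
  define u where "u = n - 1"
  have u: "u < n" "Suc u = n"
    using assms(1) by (simp_all add: u_def)
  have "blowup.reaches u (blowup.conf (Run NextRow) lo (row_tape n 0 p m out) 0)
      (blowup.conf (Run NextRow) lo (row_tape n 0 p m out) u)"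
    by (rule blowup.scan_right_conf) (use u in \<open>auto simp: row_tape_def nth_append row_mark_def\<close>)
  also have "blowup.reaches 1 \<dots> (blowup.conf (Run NextRow) lo ((row_tape n 0 p m out)[u := Ctr p Done]) (Suc u))"
    by (rule blowup.step_right) (use u in \<open>simp_all add: row_tape_def nth_append row_mark_def\<close>)
  also have "blowup.reaches 1 \<dots> (blowup.conf Halt lo ((row_tape n 0 p m out)[u := Ctr p Done]) (Suc u))"
    by (rule blowup.step_stay_same) (use u assms(2) in \<open>simp_all add: row_tape_def nth_append\<close>)
  finally show ?thesis
    by (rule blowup.reaches_cong) (use u in \<open>simp_all add: u_def\<close>)
qed

lemma corner_pass:
  assumes "v < n" "n * n = length x" "length out + 3 * n \<le> 9 * length x"
  shows "blowup.reaches (Suc n * (3 * (n + 10 * length x) + 9))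
    (blowup.conf (Run (Pass p a)) lo (row_tape (Suc v) 0 p (pass_pos a v 0) out) 0)
    (blowup.conf (Run (after_pass p a)) lo (row_tape (Suc v) 0 (\<not> p) (v * n + n) (out @ row_bits v a 0)) 0)"
proof -
  have "x \<noteq> []"
    using assms(1,2) by auto
  have "blowup.reaches (n * (3 * (n + 10 * length x) + 9))
      (blowup.conf (Run (Pass p a)) lo (row_tape (Suc v) 0 p (pass_pos a v 0) out) 0)
      (blowup.conf (Run (Pass p a)) lo (row_tape (Suc v) n p (v * n + n) (out @ row_bits v a 0)) 0)"
    by (rule blowup.reaches_cong[OF pass_loop[of 0 n]]) (use assms in \<open>simp_all add: pass_pos_def\<close>)
  also have "blowup.reaches (2 * n + 3) \<dots>
      (blowup.conf (Run (after_pass p a)) lo (row_tape (Suc v) 0 (\<not> p) (v * n + n) (out @ row_bits v a 0)) 0)"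
    by (rule pass_exit[OF \<open>x \<noteq> []\<close>])
  finally show ?thesis
    by (rule blowup.reaches_mono) simp
qed

lemma row_round:
  assumes "v < n" "n * n = length x" "length out + 9 * n \<le> 9 * length x"
  shows "blowup.reaches ((3 * n + 4) * (3 * (n + 10 * length x) + 9))
    (blowup.conf (Run NextRow) lo (row_tape v 0 p (v * n) out) 0)
    (blowup.conf (Run NextRow) lo
      (row_tape (Suc v) 0 (\<not> p) (Suc v * n) (out @ row_bits v C0 0 @ row_bits v C1 0 @ row_bits v C2 0)) 0)"
proof -
  define W where "W = 3 * (n + 10 * length x) + 9"
  have "blowup.reaches (2 * n + 4) (blowup.conf (Run NextRow) lo (row_tape v 0 p (v * n) out) 0)
      (blowup.conf (Run (Pass p C0)) lo (row_tape (Suc v) 0 p (pass_pos C0 v 0) out) 0)"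
    using next_row[OF assms(1)] by (simp add: pass_pos_def)
  also have "blowup.reaches (Suc n * W) \<dots>
      (blowup.conf (Run (Pass (\<not> p) C1)) lo (row_tape (Suc v) 0 (\<not> p) (pass_pos C1 v 0) (out @ row_bits v C0 0)) 0)"
    using corner_pass[OF assms(1,2), of out p C0 lo] assms(3) by (simp add: W_def pass_pos_def)
  also have "blowup.reaches (Suc n * W) \<dots>
      (blowup.conf (Run (Pass p C2)) lo
        (row_tape (Suc v) 0 p (pass_pos C2 v 0) ((out @ row_bits v C0 0) @ row_bits v C1 0)) 0)"
    using corner_pass[OF assms(1,2), of "out @ row_bits v C0 0" "\<not> p" C1 lo] assms(3)
    by (simp add: W_def pass_pos_def)
  also have "blowup.reaches (Suc n * W) \<dots>
      (blowup.conf (Run NextRow) lo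
        (row_tape (Suc v) 0 (\<not> p) (v * n + n) (((out @ row_bits v C0 0) @ row_bits v C1 0) @ row_bits v C2 0)) 0)"
    using corner_pass[OF assms(1,2), of "(out @ row_bits v C0 0) @ row_bits v C1 0" p C2 lo] assms(3)
    by (simp add: W_def)
  finally show ?thesis
    by (rule blowup.reaches_cong) (simp_all add: W_def algebra_simps)
qed

definition all_rows :: "nat \<Rightarrow> bool list" where
  "all_rows v = concat (map (\<lambda>u. row_bits u C0 0 @ row_bits u C1 0 @ row_bits u C2 0) [0..<v])"

lemma length_all_rows [simp]: "length (all_rows v) = 9 * n * v"
  by (induction v) (simp_all add: all_rows_def)

lemma all_rows_Suc: "all_rows (Suc v) = all_rows v @ row_bits v C0 0 @ row_bits v C1 0 @ row_bits v C2 0"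
  by (simp add: all_rows_def)

lemma rows_loop:
  assumes "v + d = n" "n * n = length x"
  shows "blowup.reaches (d * ((3 * n + 4) * (3 * (n + 10 * length x) + 9)))
    (blowup.conf (Run NextRow) lo (row_tape v 0 (odd v) (v * n) (all_rows v)) 0)
    (blowup.conf (Run NextRow) lo (row_tape n 0 (odd n) (n * n) (all_rows n)) 0)"
  using assms(1)
proof (induction d arbitrary: v)
  case (Suc d)
  have "n + v * n \<le> length x"
    using Suc.prems assms(2) mult_le_mono1[of "Suc v" n n] by simp
  then have room: "9 * n * v + 9 * n \<le> 9 * length x"
    by (simp add: algebra_simps)
  have "blowup.reaches ((3 * n + 4) * (3 * (n + 10 * length x) + 9))
      (blowup.conf (Run NextRow) lo (row_tape v 0 (odd v) (v * n) (all_rows v)) 0)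
      (blowup.conf (Run NextRow) lo (row_tape (Suc v) 0 (odd (Suc v)) (Suc v * n) (all_rows (Suc v))) 0)"
    by (rule blowup.reaches_cong[OF row_round[of v "all_rows v" lo "odd v"]])
      (use room Suc.prems assms(2) in \<open>simp_all add: all_rows_Suc\<close>)
  also have "blowup.reaches (d * ((3 * n + 4) * (3 * (n + 10 * length x) + 9))) \<dots>
      (blowup.conf (Run NextRow) lo (row_tape n 0 (odd n) (n * n) (all_rows n)) 0)"
    by (rule Suc.IH) (use Suc.prems in simp)
  finally show ?case
    by simp
qed (simp add: blowup.reaches_refl)

end

section \<open>Correctness and running time\<close>

lemma tape_output:
  assumes "lo + int (length pre) = 0"
  shows "i < length out \<Longrightarrow> blowup.tape lo (pre @ map Bit out) (int i) = Bit (out ! i)"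
    and "blowup.tape lo (pre @ map Bit out) (int (length out)) = Blank"
proof -
  have pos: "int j = lo + int (length pre + j)" for j
    using assms by simp
  show "i < length out \<Longrightarrow> blowup.tape lo (pre @ map Bit out) (int i) = Bit (out ! i)"
    unfolding pos[of i] by (subst blowup.tape_nth) (simp_all add: nth_append)
  show "blowup.tape lo (pre @ map Bit out) (int (length out)) = Blank"
    unfolding pos[of "length out"] using blowup.tape_after[of lo "pre @ map Bit out"] by simp
qed

definition halts_with :: "nat \<Rightarrow> state \<times> (int \<Rightarrow> symbol) \<times> int \<Rightarrow> bool list \<Rightarrow> bool" where
  "halts_with t c out \<longleftrightarrow> (case (blowup.step ^^ t) c of (s, tape, pos) \<Rightarrow>
     s = Halt \<and> (\<forall>i<length out. tape (int i) = Bit (out ! i)) \<and> tape (int (length out)) = Blank)"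

lemma machine_time_bound:
  fixes n L :: nat
  assumes "n * n = L" "0 < n"
  shows "L * (2 * L + 4) + 2 * L + 3 + n * ((2 * n + 4) * (2 * L + 2 * n + 5)) + (2 * (n + L) + 2)
    + n * ((3 * n + 4) * (3 * (n + 10 * L) + 9)) + (n + 1) \<le> 400 * L ^ 2"
proof -
  have "n \<le> L" "1 \<le> L"
    using assms le_square[of n] by simp_all
  have "n * (2 * n + 4) = 2 * L + 4 * n" "n * (3 * n + 4) = 3 * L + 4 * n"
    by (simp_all add: algebra_simps flip: assms(1))
  note factors = mult.assoc[symmetric, of n] this
  have "n * ((2 * n + 4) * (2 * L + 2 * n + 5)) = (2 * L + 4 * n) * (2 * L + 2 * n + 5)"
    by (simp only: factors)
  also have "\<dots> \<le> (6 * L) * (9 * L)"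
    using \<open>n \<le> L\<close> \<open>1 \<le> L\<close> by (intro mult_le_mono) simp_all
  finally have A: "n * ((2 * n + 4) * (2 * L + 2 * n + 5)) \<le> 54 * (L * L)" by simp
  have "n * ((3 * n + 4) * (3 * (n + 10 * L) + 9)) = (3 * L + 4 * n) * (3 * n + 30 * L + 9)"
    by (simp only: factors) simp
  also have "\<dots> \<le> (7 * L) * (42 * L)"
    using \<open>n \<le> L\<close> \<open>1 \<le> L\<close> by (intro mult_le_mono) simp_all
  finally have B: "n * ((3 * n + 4) * (3 * (n + 10 * L) + 9)) \<le> 294 * (L * L)" by simp
  have C: "L * (2 * L + 4) \<le> 6 * (L * L)" and "L \<le> L * L" "1 \<le> L * L"
    using \<open>1 \<le> L\<close> by (simp_all add: algebra_simps)
  have "L * (2 * L + 4) + 2 * L + 3 + n * ((2 * n + 4) * (2 * L + 2 * n + 5)) + (2 * (n + L) + 2)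
      + n * ((3 * n + 4) * (3 * (n + 10 * L) + 9)) + (n + 1)
      \<le> 6 * (L * L) + 2 * L + 3 + 54 * (L * L) + (2 * (n + L) + 2) + 294 * (L * L) + (n + 1)"
    by (intro add_mono order.refl A B C)
  also have "\<dots> \<le> 400 * L ^ 2"
  proof -
    have "6 * q + 2 * L + 3 + 54 * q + (2 * (n + L) + 2) + 294 * q + (n + 1) \<le> 400 * q"
      if "L \<le> q" "1 \<le> q" for q
      using that \<open>n \<le> L\<close> by simp
    then show ?thesis
      unfolding power2_eq_square using \<open>L \<le> L * L\<close> \<open>1 \<le> L * L\<close> by blast
  qed
  finally show ?thesis .
qed

lemma machine_run:
  assumes "n * n = length x" "0 < n"
  shows "blowup.reaches (400 * length x ^ 2) (blowup.conf ShiftScan 0 (map Bit x) 0)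
    (blowup.conf Halt (- int (length x) - int n)
      (((counter n n 0 (odd n))[n - 1 := Ctr (odd n) Done] @ inputs x (n * n) False) @ map Bit (all_rows x n n)) n)"
proof -
  define lo where "lo = - int (length x) - int n"
  have x: "x \<noteq> []"
    using assms by auto
  have "blowup.reaches (length x * (2 * length x + 4) + 2 * length x + 3) (blowup.conf ShiftScan 0 (map Bit x) 0)
      (blowup.conf (Run Check) (- int (length x)) (count_tape x 0 0 False (0 * 0)) 0)"
    by (rule blowup.reaches_cong[OF relocate_input[OF x]])
      (simp_all add: relocated_eq_inputs count_tape_def counter_def)
  also have "blowup.reaches (n * ((2 * n + 4) * (2 * length x + 2 * n + 5))) \<dots>
      (blowup.conf (Run Check) lo (count_tape x n 0 False (n * n)) 0)"
    by (rule blowup.reaches_cong[OF count_phase[OF assms(1), of 0 n]]) (simp_all add: lo_def)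
  also have "blowup.reaches (2 * (n + length x) + 2) \<dots>
      (blowup.conf (Run NextRow) lo (count_tape x n 0 False (n * n)) 0)"
    by (rule check_done[OF assms(1) x])
  also have "blowup.reaches (n * ((3 * n + 4) * (3 * (n + 10 * length x) + 9))) \<dots>
      (blowup.conf (Run NextRow) lo (row_tape x n n 0 (odd n) (n * n) (all_rows x n n)) 0)"
    by (rule blowup.reaches_cong[OF rows_loop[OF _ assms(1), of 0 n]])
      (simp_all add: count_tape_def row_tape_def assms(1) inputs_all all_rows_def)
  also have "blowup.reaches (n + 1) \<dots> (blowup.conf Halt lo
      ((row_tape x n n 0 (odd n) (n * n) (all_rows x n n))[n - 1 := Ctr (odd n) Done]) n)"
    by (rule last_row_done[OF assms(2) x])
  finally show ?thesis
    by (rule blowup.reaches_cong)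
      (use assms(2) machine_time_bound[OF assms] in \<open>simp_all add: lo_def row_tape_def list_update_append\<close>)
qed

lemma machine_halts:
  assumes "n * n = length x" "0 < n"
  shows "\<exists>t \<le> 400 * length x ^ 2. halts_with t (blowup.conf ShiftScan 0 (map Bit x) 0) (all_rows x n n)"
proof -
  define pre where "pre = (counter n n 0 (odd n))[n - 1 := Ctr (odd n) Done] @ inputs x (n * n) False"
  define lo where "lo = - int (length x) - int n"
  define out where "out = all_rows x n n"
  obtain t where t: "t \<le> 400 * length x ^ 2"
    "(blowup.step ^^ t) (blowup.conf ShiftScan 0 (map Bit x) 0) = blowup.conf Halt lo (pre @ map Bit out) n"
    using machine_run[OF assms] unfolding blowup.reaches_def pre_def lo_def out_def by blast
  have "lo + int (length pre) = 0"
    by (simp add: lo_def pre_def)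
  then have "halts_with t (blowup.conf ShiftScan 0 (map Bit x) 0) out"
    using t(2) tape_output[of lo pre] unfolding halts_with_def blowup.conf_def by simp
  then show ?thesis
    using t(1) out_def by blast
qed

lemma nth_concat_uniform:
  assumes "\<And>xs. xs \<in> set xss \<Longrightarrow> length xs = m" "i < length xss" "j < m"
  shows "concat xss ! (i * m + j) = xss ! i ! j"
  using assms
proof (induction xss arbitrary: i)
  case (Cons xs xss)
  then show ?case
    by (cases i) (auto simp: nth_append)
qed simp

lemma enc_nth: "v < n \<Longrightarrow> w < n \<Longrightarrow> enc n E ! (v * n + w) = E v w"
  unfolding enc_def by (subst nth_concat_uniform[where m = n]) auto

fun corner_num :: "corner \<Rightarrow> nat" where
  "corner_num C0 = 0" | "corner_num C1 = 1" | "corner_num C2 = 2"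

lemma corner_num_less [simp]: "corner_num a < 3"
  by (cases a) simp_all

lemma corner_num_div_mod [simp]:
  "(3 * v + corner_num a) div 3 = v" "(3 * v + corner_num a) mod 3 = corner_num a"
  by simp_all

lemma upt_triples: "[0..<3 * n] = concat (map (\<lambda>v. map (\<lambda>a. 3 * v + corner_num a) [C0, C1, C2]) [0..<n])"
proof (induction n)
  case (Suc n)
  have "[0..<3 * Suc n] = [0..<3 * n] @ [3 * n..<3 * n + 3]"
    using upt_add_eq_append[of 0 "3 * n" 3] by (simp add: ac_simps)
  also have "[3 * n..<3 * n + 3] = [3 * n, 3 * n + 1, 3 * n + 2]"
    by (simp add: numeral_3_eq_3 upt_rec)
  finally show ?case
    using Suc by simp
qed simp

lemma enc_triples: "enc (3 * n) F = concat (map (\<lambda>v. concat (map (\<lambda>a.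
    concat (map (\<lambda>w. map (\<lambda>b. F (3 * v + corner_num a) (3 * w + corner_num b)) [C0, C1, C2]) [0..<n]))
  [C0, C1, C2])) [0..<n])"
proof -
  have "concat (concat xss) = concat (map concat xss)" for xss :: "bool list list list"
    by (induction xss) simp_all
  then show ?thesis
    unfolding enc_def upt_triples by (simp add: map_concat comp_def)
qed

lemma clique_blowup_corners:
  assumes "v < n" "w < n" "\<not> E v v"
  shows "clique_blowup 3 n E (3 * v + corner_num a) (3 * w + corner_num b) = adj_bit a b (w = v) (E v w)"
proof -
  have "3 * v + corner_num a < 3 * n" "3 * w + corner_num b < 3 * n"
    using assms(1,2) corner_num_less[of a] corner_num_less[of b] by linarith+
  then show ?thesis
    unfolding clique_blowup_def corner_num_div_mod using assms(3)
    by (cases a; cases b) (auto simp: adj_bit_def)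
qed

lemma all_rows_enc:
  assumes "graph {0..<n} E"
  shows "all_rows (enc n E) n n = enc (3 * n) (clique_blowup 3 n E)"
proof -
  have "row_bits (enc n E) n v a 0 = concat (map (\<lambda>w.
      map (\<lambda>b. clique_blowup 3 n E (3 * v + corner_num a) (3 * w + corner_num b)) [C0, C1, C2]) [0..<n])"
    if "v < n" for v a
    unfolding row_bits_def cell_bits_def using that assms
    by (intro arg_cong[where f = concat] map_cong) (auto simp: enc_nth clique_blowup_corners graph_def)
  then show ?thesis
    unfolding all_rows_def enc_triples by (intro arg_cong[where f = concat] map_cong) simp_all
qed

lemma start_step:
  "blowup.reaches 1 (blowup.conf Start 0 (map Bit w) 0) (blowup.conf ShiftScan 0 (map Bit (if w = [] then [False] else w)) 0)"
proof (cases w)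
  case Nil
  show ?thesis
    using blowup.step_append_stay[of Start 0 "[]" 1 ShiftScan "Bit False" 0] Nil by simp
next
  case (Cons b w')
  have "blowup.reaches 1 (blowup.conf Start 0 (map Bit w) 0) (blowup.conf ShiftScan 0 (map Bit w) 0)"
    by (rule blowup.step_stay_same) (simp_all add: Cons)
  then show ?thesis
    using Cons by simp
qed

lemma halts_with_reaches:
  assumes "blowup.reaches B c c'" "halts_with t c' out"
  shows "\<exists>t' \<le> B + t. halts_with t' c out"
proof -
  obtain t0 where "t0 \<le> B" "(blowup.step ^^ t0) c = c'"
    using assms(1) unfolding blowup.reaches_def by blast
  then have "t + t0 \<le> B + t" "halts_with (t + t0) c out"
    using assms(2) by (simp_all add: halts_with_def funpow_add)
  then show ?thesis
    by blast
qed

lemma graph_edges_less: "graph {0..<n :: nat} E \<Longrightarrow> E u v \<Longrightarrow> u < n \<and> v < n"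
  by (simp add: graph_def)

lemma graph_max_one:
  assumes "graph {0..<n :: nat} E"
  shows "graph {0..<max n 1} E"
proof (cases "n = 0")
  case True
  then have "\<not> E u v" for u v
    using graph_edges_less[OF assms, of u v] by auto
  then show ?thesis
    by (simp add: graph_def)
next
  case False
  then have "max n 1 = n"
    by simp
  then show ?thesis
    using assms by simp
qed

lemma colorable_max_one:
  assumes "graph {0..<n :: nat} E" "0 < k"
  shows "colorable {0..<max n 1} E k \<longleftrightarrow> colorable {0..<n} E k"
proof (cases "n = 0")
  case True
  then have "\<not> E u v" for u v
    using graph_edges_less[OF assms(1), of u v] by auto
  then have "proper_coloring {0..<max n 1} E k (\<lambda>_. 0)" "proper_coloring {0..<n} E k (\<lambda>_. 0)"
    using assms(2) by (simp_all add: proper_coloring_def)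
  then show ?thesis
    unfolding colorable_def by blast
next
  case False
  then have "max n 1 = n"
    by simp
  then show ?thesis
    by simp
qed

lemma length_enc: "length (enc n E) = n * n"
  by (simp add: enc_def length_concat comp_def sum_list_triv)

lemma blowup_machine:
  assumes "graph {0..<n} E"
  shows "\<exists>t \<le> 401 * length (enc n E) ^ 2 + 401. halts_with t (blowup.conf Start 0 (map Bit (enc n E)) 0)
    (enc (3 * max n 1) (clique_blowup 3 (max n 1) E))"
proof -
  define n0 where "n0 = max n 1"
  have g0: "graph {0..<n0} E"
    using graph_max_one[OF assms] by (simp add: n0_def)
  have input: "(if enc n E = [] then [False] else enc n E) = enc n0 E"
    using assms by (cases "n = 0") (auto simp: n0_def enc_def graph_def)
  have bound: "1 + 400 * length (enc n0 E) ^ 2 \<le> 401 * length (enc n E) ^ 2 + 401"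
    by (cases "n = 0") (auto simp: n0_def length_enc)
  have "0 < n0"
    by (simp add: n0_def)
  then obtain t where "t \<le> 400 * length (enc n0 E) ^ 2"
    and "halts_with t (blowup.conf ShiftScan 0 (map Bit (enc n0 E)) 0) (all_rows (enc n0 E) n0 n0)"
    using machine_halts[OF length_enc[symmetric]] by blast
  moreover obtain t' where "t' \<le> 1 + t"
    and "halts_with t' (blowup.conf Start 0 (map Bit (enc n E)) 0) (all_rows (enc n0 E) n0 n0)"
    using halts_with_reaches[OF start_step[of "enc n E", unfolded input]] calculation(2) by blast
  ultimately have "t' \<le> 401 * length (enc n E) ^ 2 + 401"
    using bound by linarith
  then show ?thesis
    using \<open>halts_with t' _ _\<close> all_rows_enc[OF g0] n0_def by auto
qed

lemma blowup_tm:
  obtains M where "tm_wf M"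
    and "\<And>t w out. halts_with t (blowup.conf Start 0 (map Bit w) 0) out \<Longrightarrow> tm_computes_in M w out t"
proof -
  have "Start \<noteq> Halt" "distinct [Blank, Bit False, Bit True]"
    by simp_all
  then obtain M qn an where wf: "tm_wf M" and q: "qn Start = 0" "qn Halt = 1"
    and a: "an Blank = 0" "an (Bit False) = 1" "an (Bit True) = 2"
    and sim: "\<And>t s tape pos. tm_run M t (qn s, an \<circ> tape, pos) =
       (case (blowup.step ^^ t) (s, tape, pos) of (s', tape', pos') \<Rightarrow> (qn s', an \<circ> tape', pos'))"
    using blowup.simulated_by_tm[OF finite_UNIV finite_UNIV, of Start "Bit False" "Bit True"] by blast
  have an_bit: "an (Bit b) = bitsym b" for b
    by (cases b) (simp_all add: a bitsym_def)
  have init: "tm_init w = (qn Start, an \<circ> blowup.tape 0 (map Bit w), 0)" for w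
  proof -
    have "an (blowup.tape 0 (map Bit w) i) = (if 0 \<le> i \<and> i < int (length w) then bitsym (w ! nat i) else 0)" for i
      by (simp add: blowup.tape_def a an_bit nat_less_iff)
    then show ?thesis
      by (simp add: tm_init_def q comp_def)
  qed
  show thesis
  proof (rule that[OF wf])
    fix t w out
    assume "halts_with t (blowup.conf Start 0 (map Bit w) 0) out"
    then obtain tape pos where "(blowup.step ^^ t) (Start, blowup.tape 0 (map Bit w), 0) = (Halt, tape, pos)"
      and "\<forall>i<length out. tape (int i) = Bit (out ! i)" "tape (int (length out)) = Blank"
      unfolding halts_with_def blowup.conf_def by (auto split: prod.splits)
    then show "tm_computes_in M w out t"
      unfolding tm_computes_in_def init sim by (simp add: q a an_bit)
  qed
qed

theorem lemma1:
  shows "\<exists>M c k. tm_wf M \<and>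
    (\<forall>n E. graph {0..<n} E \<longrightarrow>
      (\<exists>n' E' t. graph {0..<n'} E' \<and>
         t \<le> c * length (enc n E) ^ k + c \<and>
         tm_computes_in M (enc n E) (enc n' E') t \<and>
         (colorable {0..<n} E 3 \<longleftrightarrow> fall_colorable {0..<n'} E' 3)))"
proof -
  obtain M where "tm_wf M"
    and M: "\<And>t w out. halts_with t (blowup.conf Start 0 (map Bit w) 0) out \<Longrightarrow> tm_computes_in M w out t"
    using blowup_tm by blast
  show ?thesis
  proof (rule exI[of _ M], rule exI[of _ 401], rule exI[of _ 2], intro conjI allI impI)
    fix n :: nat and E :: "nat \<Rightarrow> nat \<Rightarrow> bool"
    assume g: "graph {0..<n} E"
    have "colorable {0..<n} E 3 \<longleftrightarrow> fall_colorable {0..<3 * max n 1} (clique_blowup 3 (max n 1) E) 3"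
      using fall_colorable_clique_blowup_iff[OF graph_max_one[OF g]] colorable_max_one[OF g] by simp
    then show "\<exists>n' E' t. graph {0..<n'} E' \<and> t \<le> 401 * length (enc n E) ^ 2 + 401 \<and>
        tm_computes_in M (enc n E) (enc n' E') t \<and> (colorable {0..<n} E 3 \<longleftrightarrow> fall_colorable {0..<n'} E' 3)"
      using graph_clique_blowup[OF graph_max_one[OF g]] blowup_machine[OF g] M by blast
  qed fact
qed

end
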